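(* Let $\mathcal C$ be a $C^*$-algebra with unit $e$ and let $t\in\mathcal C$ satisfy $t^*t\ge e$. Set $t'=t(t^*t)^{-1}$, $c_k=t'^{*k}t'^k$ and $p_k=t'^kc_k^{-1}t'^{*k}$, $u_k=t'^{k+1}c_k^{-1}t'^{*(k+1)}$, $v_k=t'^kc_k^{-1}c_{k+1}c_k^{-1}t'^{*k}$ for $k\in\mathbb Z_+$. Then for all $k\in\mathbb Z_+$: (i) $p_k=p_k^*p_k$, $p_kp_{k+1}=p_{k+1}$ and $0\le p_{k+1}\le p_k\le e$; (ii) $0\le c_{k+1}\le c_k\le e$ and $c_k^{-1/2}c_{k+1}c_k^{-1/2}\le e$; (iii) $u_k=t'p_kt'^*$, $0\le t'^{k+1}t'^{*(k+1)}\le u_k\le p_{k+1}\le e$ and $u_{k+1}\le u_k$; (iv) $v_{k+1}=p_{k+1}v_kp_{k+1}$, $v_k=p_kt'^*t'p_k$ and $0\le v_k\le p_k\le e$. Moreover, $t$ is an expansive element of $C^*(t)$ and $t',c_k,c_k^{-1},p_k,u_k,v_k$ belong to $C^*(t)$.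
   Context: $C^*(t)$ is the $C^*$-subalgebra of $\mathcal C$ generated by $t$ and $e$. Since $t^*t\ge e$, $t^*t$ is invertible and each $c_k$ is invertible. An element $s$ is expansive if $s^*s\ge e$. *)

theory Defs
  imports "HOL-Analysis.Analysis"
begin

text \<open>The carrier is a type 'a that is a real Banach algebra with
unit 1 (norm 1 = 1); the complex scalar multiplication scaleC and the involution star
are parameters, subject to the axioms below.\<close>

definition cstar_algebra ::
  "(complex \<Rightarrow> 'a::{banach, real_normed_algebra_1} \<Rightarrow> 'a) \<Rightarrow> ('a \<Rightarrow> 'a) \<Rightarrow> bool" where
  "cstar_algebra scaleC star \<longleftrightarrow>
     (\<forall>x. scaleC 1 x = x) \<and>
     (\<forall>a b x. scaleC (a * b) x = scaleC a (scaleC b x)) \<and>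
     (\<forall>a b x. scaleC (a + b) x = scaleC a x + scaleC b x) \<and>
     (\<forall>a x y. scaleC a (x + y) = scaleC a x + scaleC a y) \<and>
     (\<forall>r x. scaleC (complex_of_real r) x = scaleR r x) \<and>
     (\<forall>a x y. scaleC a (x * y) = scaleC a x * y \<and> scaleC a (x * y) = x * scaleC a y) \<and>
     (\<forall>a x. norm (scaleC a x) = cmod a * norm x) \<and>
     (\<forall>x. star (star x) = x) \<and>
     (\<forall>x y. star (x + y) = star x + star y) \<and>
     (\<forall>a x. star (scaleC a x) = scaleC (cnj a) (star x)) \<and>
     (\<forall>x y. star (x * y) = star y * star x) \<and>
     (\<forall>x. norm (star x * x) = norm x ^ 2)"

definition inv_el :: "'a::ring_1 \<Rightarrow> 'a" where
  "inv_el x = (THE y. x * y = 1 \<and> y * x = 1)"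

definition spec_in ::
  "(complex \<Rightarrow> 'a::ring_1 \<Rightarrow> 'a) \<Rightarrow> 'a set \<Rightarrow> 'a \<Rightarrow> complex set" where
  "spec_in scaleC S a =
     {z. \<not> (\<exists>b\<in>S. b * (a - scaleC z 1) = 1 \<and> (a - scaleC z 1) * b = 1)}"

definition positive_in ::
  "(complex \<Rightarrow> 'a::ring_1 \<Rightarrow> 'a) \<Rightarrow> ('a \<Rightarrow> 'a) \<Rightarrow> 'a set \<Rightarrow> 'a \<Rightarrow> bool" where
  "positive_in scaleC star S a \<longleftrightarrow>
     a \<in> S \<and> star a = a \<and>
     (\<forall>z\<in>spec_in scaleC S a. Im z = 0 \<and> Re z \<ge> 0)"

definition le_in ::
  "(complex \<Rightarrow> 'a::ring_1 \<Rightarrow> 'a) \<Rightarrow> ('a \<Rightarrow> 'a) \<Rightarrow> 'a set \<Rightarrow> 'a \<Rightarrow> 'a \<Rightarrow> bool" where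
  "le_in scaleC star S a b \<longleftrightarrow> a \<in> S \<and> b \<in> S \<and> star a = a \<and> star b = b \<and>
     positive_in scaleC star S (b - a)"

text \<open>Positive square root of a positive element (unique by continuous functional calculus).\<close>
definition psqrt ::
  "(complex \<Rightarrow> 'a::ring_1 \<Rightarrow> 'a) \<Rightarrow> ('a \<Rightarrow> 'a) \<Rightarrow> 'a \<Rightarrow> 'a" where
  "psqrt scaleC star x = (THE y. positive_in scaleC star UNIV y \<and> y * y = x)"

definition cstar_subalg ::
  "(complex \<Rightarrow> 'a::{real_normed_algebra_1} \<Rightarrow> 'a) \<Rightarrow> ('a \<Rightarrow> 'a) \<Rightarrow> 'a set \<Rightarrow> bool" where
  "cstar_subalg scaleC star B \<longleftrightarrow> closed B \<and> 1 \<in> B \<and>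
     (\<forall>x\<in>B. \<forall>y\<in>B. x + y \<in> B \<and> x * y \<in> B) \<and>
     (\<forall>a. \<forall>x\<in>B. scaleC a x \<in> B) \<and> (\<forall>x\<in>B. star x \<in> B)"

definition cstar_gen ::
  "(complex \<Rightarrow> 'a::{real_normed_algebra_1} \<Rightarrow> 'a) \<Rightarrow> ('a \<Rightarrow> 'a) \<Rightarrow> 'a \<Rightarrow> 'a set" where
  "cstar_gen scaleC star t = \<Inter>{B. cstar_subalg scaleC star B \<and> t \<in> B}"

definition tp :: "('a::ring_1 \<Rightarrow> 'a) \<Rightarrow> 'a \<Rightarrow> 'a" where
  "tp star t = t * inv_el (star t * t)"

definition ck :: "('a::ring_1 \<Rightarrow> 'a) \<Rightarrow> 'a \<Rightarrow> nat \<Rightarrow> 'a" where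
  "ck star t k = (star (tp star t)) ^ k * (tp star t) ^ k"

definition pk :: "('a::ring_1 \<Rightarrow> 'a) \<Rightarrow> 'a \<Rightarrow> nat \<Rightarrow> 'a" where
  "pk star t k = (tp star t) ^ k * inv_el (ck star t k) * (star (tp star t)) ^ k"

definition uk :: "('a::ring_1 \<Rightarrow> 'a) \<Rightarrow> 'a \<Rightarrow> nat \<Rightarrow> 'a" where
  "uk star t k = (tp star t) ^ (k + 1) * inv_el (ck star t k) * (star (tp star t)) ^ (k + 1)"

definition vk :: "('a::ring_1 \<Rightarrow> 'a) \<Rightarrow> 'a \<Rightarrow> nat \<Rightarrow> 'a" where
  "vk star t k = (tp star t) ^ k * inv_el (ck star t k) * ck star t (k + 1) *
                 inv_el (ck star t k) * (star (tp star t)) ^ k"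

end

theory Submission
  imports Defs "HOL-Computational_Algebra.Formal_Power_Series"
begin

text \<open>
  The spectrum of a
  self-adjoint b is real and contains a point of modulus norm b: otherwise the resolvent of
  b / norm b would be bounded and Lipschitz on the unit circle, and averaging it over the
  2^k-th roots of unity, at b and at -b, would make (1 - b^(2^k))^-1 and (1 + b^(2^k))^-1
  arbitrarily close, although b^(2^k) has norm 1. Hence positivity can be read off norms and is
  closed under sums. The binomial series of sqrt(1 - x) provides positive square roots; with
  them one shows y^* y >= 0 (so a >= 0 implies x^* a x >= 0), that inversion reverses the
  order on invertible positive elements, and that inverses of elements of a closed
  *-subalgebra stay in it.

  For the proposition, t^* t >= e makes r = (t^* t)^-1 positive and below e, and t'^* t' = r.
  Hence c_k - c_(k+1) = t'^*k (e - r) t'^k and p_k is a projection, and the inequalities are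
  congruences x^* a x of the positive elements e - r, c_k^-1 - e, c_(k+1)^-1 - c_k^-1 and
  p_k - p_(k+1).
\<close>

definition invertible_el :: "'a::ring_1 \<Rightarrow> bool" where
  "invertible_el x \<longleftrightarrow> (\<exists>y. x * y = 1 \<and> y * x = 1)"

lemma inv_el_unique: assumes "x * y = 1" "y * x = 1" shows "inv_el x = y"
  unfolding inv_el_def
proof (rule the_equality)
  show "x * y = 1 \<and> y * x = 1" using assms by simp
  fix z assume z: "x * z = 1 \<and> z * x = 1"
  then have "z = (y * x) * z" using assms by simp
  also have "\<dots> = y" using z by (simp add: mult.assoc)
  finally show "z = y" .
qed

lemma invertible_elI: "x * y = 1 \<Longrightarrow> y * x = 1 \<Longrightarrow> invertible_el x"
  unfolding invertible_el_def by blast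

lemma right_inv_el[simp]: "invertible_el x \<Longrightarrow> x * inv_el x = 1"
  unfolding invertible_el_def using inv_el_unique by blast

lemma left_inv_el[simp]: "invertible_el x \<Longrightarrow> inv_el x * x = 1"
  unfolding invertible_el_def using inv_el_unique by blast

lemma mult_inv_el_cancel_left: "invertible_el x \<Longrightarrow> x * (inv_el x * y) = y"
  by (simp add: mult.assoc[symmetric])

lemma inv_el_mult_cancel_left: "invertible_el x \<Longrightarrow> inv_el x * (x * y) = y"
  by (simp add: mult.assoc[symmetric])

lemma not_invertible_el_zero: "\<not> invertible_el 0"
  unfolding invertible_el_def by simp

lemma inv_el_nonzero: "invertible_el a \<Longrightarrow> inv_el a \<noteq> 0"
  using right_inv_el[of a] by force

lemma invertible_el_one[simp]: "invertible_el 1" and inv_el_one[simp]: "inv_el 1 = 1"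
  using invertible_elI[of 1 1] inv_el_unique[of 1 1] by auto

lemma invertible_el_inv_el: "invertible_el x \<Longrightarrow> invertible_el (inv_el x)"
  and inv_el_inv_el: "invertible_el x \<Longrightarrow> inv_el (inv_el x) = x"
  using invertible_elI[of "inv_el x" x] inv_el_unique[of "inv_el x" x] by auto

lemma invertible_el_mult: "invertible_el x \<Longrightarrow> invertible_el y \<Longrightarrow> invertible_el (x * y)"
  and inv_el_mult: "invertible_el x \<Longrightarrow> invertible_el y \<Longrightarrow> inv_el (x * y) = inv_el y * inv_el x"
proof -
  assume xy: "invertible_el x" "invertible_el y"
  have a: "x * y * (inv_el y * inv_el x) = 1"
    using xy by (simp add: mult.assoc mult_inv_el_cancel_left)
  have b: "inv_el y * inv_el x * (x * y) = 1"
    using xy by (simp add: mult.assoc inv_el_mult_cancel_left)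
  show "invertible_el (x * y)" "inv_el (x * y) = inv_el y * inv_el x"
    using invertible_elI[OF a b] inv_el_unique[OF a b] by auto
qed

lemma invertible_el_minus_iff: "invertible_el (- x) \<longleftrightarrow> invertible_el x"
proof -
  have neg: "invertible_el (- y)" if "invertible_el y" for y
    using that invertible_elI[of "- y" "- inv_el y"] by simp
  show ?thesis using neg[of x] neg[of "- x"] by auto
qed

lemma inv_el_commute: assumes "invertible_el b" "a * b = b * a" shows "a * inv_el b = inv_el b * a"
proof -
  have "a * inv_el b = (inv_el b * b) * a * inv_el b" using assms by simp
  also have "\<dots> = inv_el b * (b * a) * inv_el b" by (simp only: mult.assoc)
  also have "\<dots> = inv_el b * (a * b) * inv_el b" by (simp only: assms(2))
  also have "\<dots> = inv_el b * a * (b * inv_el b)" by (simp only: mult.assoc)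
  also have "\<dots> = inv_el b * a" using assms by simp
  finally show ?thesis .
qed

lemma invertible_el_commuting_factor:
  assumes "x * y = y * x" "invertible_el (x * y)" shows "invertible_el x"
proof -
  let ?w = "inv_el (x * y)"
  have "x * (x * y) = (x * y) * x" by (metis mult.assoc assms(1))
  then have c: "x * ?w = ?w * x" using inv_el_commute[OF assms(2)] by simp
  have a: "x * (y * ?w) = 1" using assms by (simp add: mult.assoc[symmetric])
  have "(y * ?w) * x = y * (x * ?w)" using c by (simp add: mult.assoc)
  also have "\<dots> = 1" using assms by (simp add: mult.assoc[symmetric])
  finally show ?thesis using invertible_elI[OF a] by blast
qed

lemma invertible_el_if_square: "y * y = c \<Longrightarrow> invertible_el c \<Longrightarrow> invertible_el y"
  using invertible_el_commuting_factor[of y y] by simp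

lemma invertible_el_one_minus_swap:
  assumes i: "invertible_el (1 - a * b)" shows "invertible_el (1 - b * a)"
proof -
  let ?w = "inv_el (1 - a * b)"
  have "(1 - b * a) * (1 + b * ?w * a) = 1 - b * a + b * ((1 - a * b) * ?w) * a"
    by (simp add: algebra_simps)
  also have "\<dots> = 1" using i by simp
  finally have l: "(1 - b * a) * (1 + b * ?w * a) = 1" .
  have "(1 + b * ?w * a) * (1 - b * a) = 1 - b * a + b * (?w * (1 - a * b)) * a"
    by (simp add: algebra_simps)
  also have "\<dots> = 1" using i by simp
  finally have r: "(1 + b * ?w * a) * (1 - b * a) = 1" .
  show ?thesis by (rule invertible_elI[OF l r])
qed

lemma norm_mult3_ineq:
  fixes a b c :: "'a::real_normed_algebra"
  shows "norm (a * b * c) \<le> norm a * norm b * norm c"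
  by (rule order_trans[OF norm_mult_ineq mult_right_mono[OF norm_mult_ineq norm_ge_zero]])

lemma summable_norm_power:
  fixes x :: "'a::real_normed_algebra_1"
  assumes "norm x < 1"
  shows "summable (\<lambda>n. norm (x ^ n))"
proof (rule summable_comparison_test[where g = "\<lambda>n. norm x ^ n"])
  show "\<exists>N. \<forall>n\<ge>N. norm (norm (x ^ n)) \<le> norm x ^ n"
    by (intro exI[of _ 0] allI impI) (simp add: norm_power_ineq)
  show "summable (\<lambda>n. norm x ^ n)" using assms by (simp add: summable_geometric)
qed

lemma invertible_el_one_minus:
  fixes x :: "'a::{banach, real_normed_algebra_1}"
  assumes "norm x < 1"
  shows "invertible_el (1 - x)" "inv_el (1 - x) = (\<Sum>n. x ^ n)"
    "norm (inv_el (1 - x)) \<le> 1 / (1 - norm x)"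
proof -
  have sn: "summable (\<lambda>n. norm (x ^ n))" using summable_norm_power[OF assms] .
  then have s: "summable (\<lambda>n. x ^ n)" by (rule summable_norm_cancel)
  let ?S = "\<Sum>n. x ^ n"
  have h: "(\<Sum>n. x ^ Suc n) = ?S - 1" using suminf_split_head[OF s] by simp
  have l: "x * ?S = (\<Sum>n. x ^ Suc n)" using suminf_mult[OF s, of x] by simp
  have r: "?S * x = (\<Sum>n. x ^ Suc n)" using suminf_mult2[OF s, of x] by (simp add: power_commutes)
  have a: "(1 - x) * ?S = 1" using l h by (simp add: left_diff_distrib)
  have b: "?S * (1 - x) = 1" using r h by (simp add: right_diff_distrib)
  show "invertible_el (1 - x)" "inv_el (1 - x) = ?S"
    using invertible_elI[OF a b] inv_el_unique[OF a b] by auto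
  have "norm ?S \<le> (\<Sum>n. norm (x ^ n))" by (rule summable_norm[OF sn])
  also have "\<dots> \<le> (\<Sum>n. norm x ^ n)"
    by (rule suminf_le) (simp_all add: norm_power_ineq sn summable_geometric assms)
  also have "\<dots> = 1 / (1 - norm x)" using suminf_geometric[of "norm x"] assms by simp
  finally show "norm (inv_el (1 - x)) \<le> 1 / (1 - norm x)" using \<open>inv_el (1 - x) = ?S\<close> by simp
qed

lemma invertible_el_perturb:
  fixes a x :: "'a::{banach, real_normed_algebra_1}"
  assumes "invertible_el a" "norm (x - a) * norm (inv_el a) < 1"
  shows "invertible_el x" "norm (inv_el x) \<le> norm (inv_el a) / (1 - norm (inv_el a) * norm (x - a))"
    "norm (inv_el x - inv_el a) \<le> norm (inv_el x) * norm (x - a) * norm (inv_el a)"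
proof -
  let ?y = "inv_el a * (a - x)"
  have ny: "norm ?y \<le> norm (inv_el a) * norm (x - a)"
    using norm_mult_ineq[of "inv_el a" "a - x"] by (simp add: norm_minus_commute)
  then have ny1: "norm ?y < 1" using assms(2) by (simp add: mult.commute)
  have xe: "x = a * (1 - ?y)" using assms(1) by (simp add: right_diff_distrib mult_inv_el_cancel_left)
  note iy = invertible_el_one_minus[OF ny1]
  show ix: "invertible_el x" using xe invertible_el_mult[OF assms(1) iy(1)] by simp
  have "norm (inv_el x) \<le> norm (inv_el (1 - ?y)) * norm (inv_el a)"
    using xe inv_el_mult[OF assms(1) iy(1)] norm_mult_ineq by metis
  also have "\<dots> \<le> 1 / (1 - norm ?y) * norm (inv_el a)"
    by (rule mult_right_mono[OF iy(3)]) simp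
  also have "\<dots> \<le> 1 / (1 - norm (inv_el a) * norm (x - a)) * norm (inv_el a)"
  proof (rule mult_right_mono)
    have "0 < 1 - norm (inv_el a) * norm (x - a)" using assms(2) by (simp add: mult.commute)
    then show "1 / (1 - norm ?y) \<le> 1 / (1 - norm (inv_el a) * norm (x - a))"
      using ny ny1 by (simp add: frac_le)
  qed simp
  finally show "norm (inv_el x) \<le> norm (inv_el a) / (1 - norm (inv_el a) * norm (x - a))" by simp
  have "inv_el x - inv_el a = inv_el x * (a - x) * inv_el a"
    using ix assms(1) by (simp add: algebra_simps inv_el_mult_cancel_left mult.assoc)
  then show "norm (inv_el x - inv_el a) \<le> norm (inv_el x) * norm (x - a) * norm (inv_el a)"
    using norm_mult3_ineq by (metis norm_minus_commute)
qed

lemma tendsto_inv_el: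
  fixes f :: "'b \<Rightarrow> 'a::{banach, real_normed_algebra_1}"
  assumes f: "(f \<longlongrightarrow> a) F" and a: "invertible_el a"
  shows "((\<lambda>x. inv_el (f x)) \<longlongrightarrow> inv_el a) F"
proof -
  define N where "N = norm (inv_el a)"
  have dist0: "((\<lambda>x. norm (f x - a)) \<longlongrightarrow> 0) F"
    by (rule tendsto_norm_zero[OF Lim_null[THEN iffD1, OF f]])
  then have "((\<lambda>x. norm (f x - a) * N) \<longlongrightarrow> 0) F" by (rule tendsto_mult_left_zero)
  then have near: "\<forall>\<^sub>F x in F. norm (f x - a) * N < 1 / 2"
    by (rule order_tendstoD) simp
  have "\<forall>\<^sub>F x in F. norm (inv_el (f x) - inv_el a) \<le> 2 * N * N * norm (f x - a)"
    using near
  proof eventually_elim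
    case (elim x)
    then have small: "norm (f x - a) * N < 1" by simp
    have "1 / 2 < 1 - N * norm (f x - a)" using elim by (simp add: mult.commute)
    then have "N / (1 - N * norm (f x - a)) \<le> N / (1 / 2)"
      by (intro divide_left_mono) (simp_all add: N_def)
    then have "N / (1 - N * norm (f x - a)) \<le> 2 * N" by simp
    then have "norm (inv_el (f x)) \<le> 2 * N"
      using invertible_el_perturb(2)[OF a small[unfolded N_def]] N_def by simp
    then have "norm (inv_el (f x)) * norm (f x - a) * N \<le> 2 * N * norm (f x - a) * N"
      by (intro mult_right_mono) (simp_all add: N_def)
    with invertible_el_perturb(3)[OF a small[unfolded N_def]]
    have "norm (inv_el (f x) - inv_el a) \<le> 2 * N * norm (f x - a) * N"
      unfolding N_def by linarith
    then show ?case by (simp only: mult_ac)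
  qed
  moreover have "((\<lambda>x. 2 * N * N * norm (f x - a)) \<longlongrightarrow> 0) F"
    using dist0 by (rule tendsto_mult_right_zero)
  ultimately have "((\<lambda>x. inv_el (f x) - inv_el a) \<longlongrightarrow> 0) F"
    by (rule Lim_null_comparison)
  then show ?thesis by (rule Lim_null[THEN iffD2])
qed

lemma inv_el_one_minus_plus:
  fixes w :: "'a::real_normed_algebra_1"
  assumes "invertible_el (1 - w)" "invertible_el (1 + w)"
  shows "invertible_el (1 - w * w)" "inv_el (1 - w) + inv_el (1 + w) = 2 *\<^sub>R inv_el (1 - w * w)"
proof -
  have e: "1 - w * w = (1 + w) * (1 - w)" by (simp add: algebra_simps)
  show "invertible_el (1 - w * w)" using e invertible_el_mult[OF assms(2,1)] by simp
  have "inv_el (1 - w) * ((1 + w) + (1 - w)) * inv_el (1 + w)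
      = inv_el (1 - w) * (1 + w) * inv_el (1 + w) + inv_el (1 - w) * (1 - w) * inv_el (1 + w)"
    by (simp only: distrib_left distrib_right)
  then have "inv_el (1 - w) + inv_el (1 + w) = inv_el (1 - w) * ((1 + w) + (1 - w)) * inv_el (1 + w)"
    using assms by (simp add: mult.assoc)
  also have "(1 + w) + (1 - w) = 2 *\<^sub>R (1::'a)" by (simp add: scaleR_2)
  also have "inv_el (1 - w) * (2 *\<^sub>R 1) * inv_el (1 + w) = 2 *\<^sub>R (inv_el (1 - w) * inv_el (1 + w))"
    by simp
  also have "inv_el (1 - w) * inv_el (1 + w) = inv_el (1 - w * w)"
    using e inv_el_mult[OF assms(2,1)] by simp
  finally show "inv_el (1 - w) + inv_el (1 + w) = 2 *\<^sub>R inv_el (1 - w * w)" .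
qed

lemma norm_inv_el_one_minus_diff_ge:
  fixes v :: "'a::real_normed_algebra_1"
  assumes "invertible_el (1 - v)" "invertible_el (1 + v)" "norm v = 1"
  shows "1 \<le> 2 * norm (inv_el (1 - v) - inv_el (1 + v))"
proof -
  have "(1 - v) * (inv_el (1 - v) - inv_el (1 + v)) * (1 + v)
      = (1 - v) * inv_el (1 - v) * (1 + v) - (1 - v) * inv_el (1 + v) * (1 + v)"
    by (simp only: right_diff_distrib left_diff_distrib)
  also have "\<dots> = 2 *\<^sub>R v" using assms by (simp add: mult.assoc mult_inv_el_cancel_left scaleR_2)
  finally have "2 \<le> norm (1 - v) * norm (inv_el (1 - v) - inv_el (1 + v)) * norm (1 + v)"
    using assms(3) norm_mult3_ineq by (metis norm_scaleR abs_numeral mult.right_neutral)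
  also have "\<dots> \<le> 2 * norm (inv_el (1 - v) - inv_el (1 + v)) * 2"
    using norm_triangle_ineq4[of 1 v] norm_triangle_ineq[of 1 v] assms(3)
    by (intro mult_mono) simp_all
  finally show ?thesis by simp
qed

definition unit_root :: "nat \<Rightarrow> complex" where "unit_root k = exp (2 * pi * \<i> / 2 ^ k)"

lemma unit_root_0: "unit_root 0 = 1"
  unfolding unit_root_def by simp

lemma unit_root_Suc_square: "unit_root (Suc k) ^ 2 = unit_root k"
proof -
  have "unit_root (Suc k) ^ 2 = exp (of_nat 2 * (2 * pi * \<i> / 2 ^ Suc k))"
    unfolding unit_root_def by (simp only: exp_of_nat_mult)
  also have "of_nat 2 * (2 * pi * \<i> / 2 ^ Suc k) = 2 * pi * \<i> / 2 ^ k" by simp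
  finally show ?thesis unfolding unit_root_def .
qed

lemma unit_root_Suc_power_half: "unit_root (Suc k) ^ (2 ^ k) = -1"
proof -
  have "unit_root (Suc k) ^ (2 ^ k) = exp (of_nat (2 ^ k) * (2 * pi * \<i> / 2 ^ Suc k))"
    unfolding unit_root_def by (simp only: exp_of_nat_mult)
  also have "of_nat (2 ^ k) * (2 * pi * \<i> / 2 ^ Suc k) = \<i> * complex_of_real pi" by simp
  finally show ?thesis using exp_pi_i' by simp
qed

lemma norm_unit_root_power: "cmod (unit_root k ^ j) = 1"
proof -
  have "unit_root k = exp (\<i> * complex_of_real (2 * pi / 2 ^ k))" unfolding unit_root_def
    by (simp add: mult.commute mult.left_commute)
  then show ?thesis by (simp add: norm_power norm_exp_i_times)
qed

lemma unit_root_tendsto_one: "unit_root \<longlonglongrightarrow> 1"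
proof -
  have "(\<lambda>k. inverse ((2::real) ^ k)) \<longlonglongrightarrow> 0"
    by (rule LIMSEQ_inverse_realpow_zero) simp
  then have "(\<lambda>k. exp ((2 * pi * \<i>) * complex_of_real (inverse ((2::real) ^ k))))
      \<longlonglongrightarrow> exp ((2 * pi * \<i>) * complex_of_real 0)"
    by (intro tendsto_intros)
  moreover have "(2 * pi * \<i>) * complex_of_real (inverse ((2::real) ^ k)) = 2 * pi * \<i> / 2 ^ k" for k
    by (simp only: of_real_inverse of_real_power of_real_numeral divide_inverse)
  ultimately show ?thesis unfolding unit_root_def by simp
qed

lemma sum_lessThan_add: "sum f {..<n + m} = sum f {..<n} + (\<Sum>j<m. f (j + n))"
  for f :: "nat \<Rightarrow> 'a::comm_monoid_add"
  by (induction m) (simp_all add: add.commute add.left_commute)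

locale cstar =
  fixes scaleC :: "complex \<Rightarrow> 'a::{banach, real_normed_algebra_1} \<Rightarrow> 'a"
    and star :: "'a \<Rightarrow> 'a"
  assumes cstar_algebra: "cstar_algebra scaleC star"
begin

lemma scaleC_one[simp]: "scaleC 1 x = x"
  using cstar_algebra unfolding cstar_algebra_def by (elim conjE) simp

lemma scaleC_scaleC[simp]: "scaleC a (scaleC b x) = scaleC (a * b) x"
  using cstar_algebra unfolding cstar_algebra_def by (elim conjE) simp

lemma scaleC_add_left: "scaleC (a + b) x = scaleC a x + scaleC b x"
  using cstar_algebra unfolding cstar_algebra_def by (elim conjE) simp

lemma scaleC_add_right: "scaleC a (x + y) = scaleC a x + scaleC a y"
  using cstar_algebra unfolding cstar_algebra_def by (elim conjE) simp

lemma scaleC_of_real[simp]: "scaleC (complex_of_real r) x = r *\<^sub>R x"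
  using cstar_algebra unfolding cstar_algebra_def by (elim conjE) simp

lemma scaleC_mult_left: "scaleC a (x * y) = scaleC a x * y"
  using cstar_algebra unfolding cstar_algebra_def by (elim conjE) simp

lemma scaleC_mult_right: "scaleC a (x * y) = x * scaleC a y"
  using cstar_algebra unfolding cstar_algebra_def by (elim conjE) metis

lemma norm_scaleC[simp]: "norm (scaleC a x) = cmod a * norm x"
  using cstar_algebra unfolding cstar_algebra_def by (elim conjE) simp

lemma star_star[simp]: "star (star x) = x"
  using cstar_algebra unfolding cstar_algebra_def by (elim conjE) simp

lemma star_add[simp]: "star (x + y) = star x + star y"
  using cstar_algebra unfolding cstar_algebra_def by (elim conjE) simp

lemma star_scaleC[simp]: "star (scaleC a x) = scaleC (cnj a) (star x)"
  using cstar_algebra unfolding cstar_algebra_def by (elim conjE) simp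

lemma star_mult[simp]: "star (x * y) = star y * star x"
  using cstar_algebra unfolding cstar_algebra_def by (elim conjE) simp

lemma norm_star_mult_self: "norm (star x * x) = norm x ^ 2"
  using cstar_algebra unfolding cstar_algebra_def by (elim conjE) simp

lemma scaleC_zero_left[simp]: "scaleC 0 x = 0"
  using scaleC_of_real[of 0 x] by simp

lemma scaleC_zero_right[simp]: "scaleC a 0 = 0"
  by (metis norm_eq_zero mult_zero_right norm_zero norm_scaleC)

lemma scaleC_minus_right: "scaleC a (- x) = - scaleC a x"
  using scaleC_add_right[of a x "-x"] by (simp add: add_eq_0_iff)

lemma scaleC_diff_right: "scaleC a (x - y) = scaleC a x - scaleC a y"
  using scaleC_add_right[of a x "-y"] by (simp add: scaleC_minus_right)

lemma scaleC_minus_left: "scaleC (- a) x = - scaleC a x"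
  using scaleC_add_left[of a "-a" x] by (simp add: add_eq_0_iff)

lemma scaleC_minus_one[simp]: "scaleC (- 1) x = - x"
  by (simp add: scaleC_minus_left)

lemma scaleC_diff_left: "scaleC (a - b) x = scaleC a x - scaleC b x"
  using scaleC_add_left[of a "-b" x] by (simp add: scaleC_minus_left)

lemma scaleC_one_mult: "scaleC a 1 * x = scaleC a x"
  by (metis mult_1_left scaleC_mult_left)

lemma mult_scaleC_one: "x * scaleC a 1 = scaleC a x"
  by (metis mult_1_right scaleC_mult_right)

lemma scaleC_mult_scaleC: "scaleC a x * scaleC b y = scaleC (a * b) (x * y)"
proof -
  have "scaleC a x * scaleC b y = scaleC a (x * scaleC b y)" by (simp add: scaleC_mult_left)
  also have "\<dots> = scaleC a (scaleC b (x * y))" by (simp add: scaleC_mult_right)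
  finally show ?thesis by simp
qed

lemma power_scaleC: "(scaleC z x) ^ n = scaleC (z ^ n) (x ^ n)"
  by (induction n) (simp_all add: scaleC_mult_scaleC)

lemma scaleC_scaleR: "scaleC a (r *\<^sub>R x) = r *\<^sub>R scaleC a x"
proof -
  have "scaleC a (r *\<^sub>R x) = scaleC a (scaleC (complex_of_real r) x)" by (simp only: scaleC_of_real)
  also have "\<dots> = scaleC (complex_of_real r) (scaleC a x)"
    using mult.commute[of a "complex_of_real r"] by (simp only: scaleC_scaleC)
  finally show ?thesis by (simp only: scaleC_of_real)
qed

lemma bounded_linear_scaleC_left: "bounded_linear (\<lambda>z. scaleC z x)"
proof (rule bounded_linear_intro[where K = "norm x"])
  show "scaleC (r *\<^sub>R z) x = r *\<^sub>R scaleC z x" for r z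
    by (metis scaleC_of_real scaleC_scaleC scaleR_conv_of_real)
qed (simp_all add: scaleC_add_left)

lemma star_zero[simp]: "star 0 = 0"
  using star_add[of 0 0] by simp

lemma star_one[simp]: "star 1 = 1"
proof -
  have "star (star 1 * 1) = star 1 * star (star 1)" by (rule star_mult)
  then show ?thesis by simp
qed

lemma star_minus[simp]: "star (- x) = - star x"
  using star_add[of x "-x"] by (simp add: add_eq_0_iff)

lemma star_diff[simp]: "star (x - y) = star x - star y"
  using star_add[of x "-y"] by simp

lemma star_scaleR[simp]: "star (r *\<^sub>R x) = r *\<^sub>R star x"
  using star_scaleC[of "complex_of_real r" x] by simp

lemma star_power: "star (x ^ n) = (star x) ^ n"
  by (induction n) (simp_all add: power_commutes)

lemma norm_star[simp]: "norm (star x) = norm x"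
proof -
  have le: "norm y \<le> norm (star y)" for y
  proof (cases "y = 0")
    case False
    have "norm y ^ 2 \<le> norm (star y) * norm y"
      using norm_star_mult_self[of y] norm_mult_ineq[of "star y" y] by simp
    then show ?thesis using False by (simp add: power2_eq_square)
  qed simp
  show ?thesis using le[of x] le[of "star x"] by simp
qed

lemma norm_mult_star_self: "norm (x * star x) = norm x ^ 2"
  using norm_star_mult_self[of "star x"] by simp

lemma bounded_linear_star: "bounded_linear star"
  by (rule bounded_linear_intro[where K = 1]) simp_all

lemma star_suminf: "summable f \<Longrightarrow> star (suminf f) = (\<Sum>n. star (f n))"
  using bounded_linear.suminf[OF bounded_linear_star] by metis

lemma norm_power_two_selfadjoint:
  assumes "star h = h" shows "norm (h ^ (2 ^ k)) = norm h ^ (2 ^ k)"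
proof (induction k)
  case (Suc k)
  have "h ^ (2 ^ Suc k) = h ^ (2 ^ k) * h ^ (2 ^ k)"
    by (simp add: power_add[symmetric] mult_2)
  moreover have "star (h ^ (2 ^ k)) = h ^ (2 ^ k)" using assms by (simp add: star_power)
  ultimately have "norm (h ^ (2 ^ Suc k)) = norm (h ^ (2 ^ k)) ^ 2"
    using norm_star_mult_self by metis
  also have "\<dots> = norm h ^ (2 ^ Suc k)" using Suc by (simp add: power_mult[symmetric] mult.commute)
  finally show ?case .
qed simp

lemma invertible_el_star: "invertible_el x \<Longrightarrow> invertible_el (star x)"
  and inv_el_star: "invertible_el x \<Longrightarrow> inv_el (star x) = star (inv_el x)"
proof -
  assume "invertible_el x"
  then have a: "star x * star (inv_el x) = 1" and b: "star (inv_el x) * star x = 1"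
    by (metis star_mult left_inv_el right_inv_el star_one)+
  show "invertible_el (star x)" "inv_el (star x) = star (inv_el x)"
    using invertible_elI[OF a b] inv_el_unique[OF a b] by auto
qed

lemma star_inv_el_selfadjoint: "invertible_el x \<Longrightarrow> star x = x \<Longrightarrow> star (inv_el x) = inv_el x"
  using inv_el_star by metis

lemma invertible_el_scaleC: "invertible_el x \<Longrightarrow> z \<noteq> 0 \<Longrightarrow> invertible_el (scaleC z x)"
  and inv_el_scaleC: "invertible_el x \<Longrightarrow> z \<noteq> 0 \<Longrightarrow> inv_el (scaleC z x) = scaleC (1 / z) (inv_el x)"
proof -
  assume "invertible_el x" "z \<noteq> 0"
  then have a: "scaleC z x * scaleC (1 / z) (inv_el x) = 1"
    and b: "scaleC (1 / z) (inv_el x) * scaleC z x = 1" by (simp_all add: scaleC_mult_scaleC)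
  show "invertible_el (scaleC z x)" "inv_el (scaleC z x) = scaleC (1 / z) (inv_el x)"
    using invertible_elI[OF a b] inv_el_unique[OF a b] by auto
qed

lemma invertible_el_scaleR: "invertible_el x \<Longrightarrow> r \<noteq> 0 \<Longrightarrow> invertible_el (r *\<^sub>R x)" for x :: 'a
  using invertible_el_scaleC[of x "complex_of_real r"] by simp

lemma invertible_el_mult_swap:
  assumes z: "z \<noteq> 0" and i: "invertible_el (x * y - scaleC z 1)"
  shows "invertible_el (y * x - scaleC z 1)"
proof -
  let ?a = "scaleC (1 / z) x"
  have "scaleC (- z) (1 - ?a * y) = scaleC (- z) 1 - scaleC (- z * (1 / z)) (x * y)"
    by (simp add: scaleC_diff_right scaleC_mult_left)
  then have e: "x * y - scaleC z 1 = scaleC (- z) (1 - ?a * y)"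
    using z by (simp add: scaleC_minus_left)
  have "scaleC (- z) (1 - y * ?a) = scaleC (- z) 1 - scaleC (- z * (1 / z)) (y * x)"
    by (simp add: scaleC_diff_right scaleC_mult_right)
  then have e': "y * x - scaleC z 1 = scaleC (- z) (1 - y * ?a)"
    using z by (simp add: scaleC_minus_left)
  have "invertible_el (scaleC (- 1 / z) (x * y - scaleC z 1))" using invertible_el_scaleC[OF i] z by simp
  then have "invertible_el (1 - ?a * y)" unfolding e using z by simp
  then have "invertible_el (1 - y * ?a)" by (rule invertible_el_one_minus_swap)
  then show ?thesis unfolding e' using invertible_el_scaleC z by simp
qed

lemma invertible_el_resolvent_large: assumes "norm a < cmod z" shows "invertible_el (a - scaleC z 1)"
proof -
  have z: "z \<noteq> 0" using assms by (metis norm_ge_zero norm_zero not_less)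
  have n: "norm (scaleC (1 / z) a) < 1" using assms z by (simp add: norm_divide field_simps)
  have "a - scaleC z 1 = scaleC (- z) (1 - scaleC (1 / z) a)" using z
    by (simp add: scaleC_diff_right scaleC_minus_left)
  then show ?thesis using invertible_el_scaleC[OF invertible_el_one_minus(1)[OF n], of "-z"] z by simp
qed

lemma spectrum_norm_bound: "\<not> invertible_el (a - scaleC z 1) \<Longrightarrow> cmod z \<le> norm a"
  using invertible_el_resolvent_large[of a z] by (meson not_le)

section \<open>The spectrum of a self-adjoint element\<close>

definition iunit :: 'a where "iunit = scaleC \<i> 1"

lemma iunit_square: "iunit * iunit = -1"
  unfolding iunit_def by (simp add: scaleC_mult_scaleC)

lemma iunit_commute: "iunit * x = x * iunit"
  unfolding iunit_def by (simp add: scaleC_one_mult mult_scaleC_one)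

lemma star_iunit[simp]: "star iunit = - iunit"
  unfolding iunit_def by (simp add: scaleC_minus_left)

lemma scaleC_one_Re_Im: "scaleC z 1 = Re z *\<^sub>R 1 + Im z *\<^sub>R iunit"
proof -
  have "z = complex_of_real (Re z) + \<i> * complex_of_real (Im z)" by (simp add: complex_eq_iff)
  then have "scaleC z 1 = scaleC (complex_of_real (Re z)) 1 + scaleC \<i> (scaleC (complex_of_real (Im z)) 1)"
    by (metis scaleC_add_left scaleC_scaleC)
  then show ?thesis by (simp add: scaleC_scaleR iunit_def)
qed

text \<open>
  If \<open>h - z\<close> were singular with \<open>Im z = y \<noteq> 0\<close>, then so would be \<open>u - i(y + l)\<close> for
  \<open>u = h - Re z + il\<close>; but \<open>\<parallel>u\<parallel>\<^sup>2 = \<parallel>u\<^sup>*u\<parallel> \<le> \<parallel>h - Re z\<parallel>\<^sup>2 + l\<^sup>2\<close>, which is smaller than \<open>(y + l)\<^sup>2\<close> for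
  a suitable real \<open>l\<close>.
\<close>

lemma invertible_el_selfadjoint_nonreal:
  assumes h: "star h = h" and y: "Im z \<noteq> 0" shows "invertible_el (h - scaleC z 1)"
proof (rule ccontr)
  assume ni: "\<not> invertible_el (h - scaleC z 1)"
  define g where "g = h - (Re z) *\<^sub>R 1"
  have sg: "star g = g" using h by (simp add: g_def)
  define l where "l = (norm g ^ 2 + 1) / (2 * Im z)"
  define u where "u = g + l *\<^sub>R iunit"
  have "u - scaleC (\<i> * complex_of_real (Im z + l)) 1 = h - scaleC z 1"
    unfolding u_def g_def by (simp add: scaleC_one_Re_Im algebra_simps)
  then have "cmod (\<i> * complex_of_real (Im z + l)) \<le> norm u"
    using ni spectrum_norm_bound by metis
  then have b1: "\<bar>Im z + l\<bar> \<le> norm u" by (simp add: norm_mult flip: of_real_add)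
  have "star u * u = g * g + l *\<^sub>R (g * iunit) - l *\<^sub>R (iunit * g) - (l * l) *\<^sub>R (iunit * iunit)"
    unfolding u_def by (simp add: algebra_simps sg)
  also have "\<dots> = g * g + (l ^ 2) *\<^sub>R 1"
    by (simp add: iunit_commute[of g] iunit_square power2_eq_square)
  finally have "norm u ^ 2 = norm (g * g + (l ^ 2) *\<^sub>R 1)" using norm_star_mult_self[of u] by simp
  also have "\<dots> \<le> norm g ^ 2 + l ^ 2"
    by (rule order_trans[OF norm_triangle_ineq]) (simp add: norm_mult_ineq power2_eq_square)
  finally have b2: "norm u ^ 2 \<le> norm g ^ 2 + l ^ 2" .
  have "(Im z + l) ^ 2 \<le> norm u ^ 2" using b1 by (metis abs_ge_zero power2_abs power_mono)
  with b2 have "(Im z) ^ 2 + 2 * Im z * l \<le> norm g ^ 2" by (simp add: power2_eq_square algebra_simps)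
  moreover have "2 * Im z * l = norm g ^ 2 + 1" using y by (simp add: l_def)
  ultimately show False by (smt (verit) zero_le_power2)
qed

lemma resolvent_average_unit_roots:
  "(\<forall>j<2 ^ k. invertible_el (1 - scaleC (unit_root k ^ j) u)) \<Longrightarrow>
   invertible_el (1 - u ^ (2 ^ k)) \<and>
   (\<Sum>j<2 ^ k. inv_el (1 - scaleC (unit_root k ^ j) u)) = (2 ^ k) *\<^sub>R inv_el (1 - u ^ (2 ^ k))"
proof (induction k arbitrary: u)
  case 0
  then show ?case by (simp add: unit_root_0)
next
  case (Suc k)
  define n :: nat where "n = 2 ^ k"
  let ?w = "\<lambda>j. scaleC (unit_root (Suc k) ^ j) u"
  have nn: "2 ^ Suc k = n + n" by (simp add: n_def)
  have neg: "?w (j + n) = - ?w j" for j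
    by (simp add: power_add n_def unit_root_Suc_power_half scaleC_minus_left)
  have sq: "?w j * ?w j = scaleC (unit_root k ^ j) (u * u)" for j
  proof -
    have "unit_root (Suc k) ^ j * unit_root (Suc k) ^ j = unit_root k ^ j"
      by (metis unit_root_Suc_square power2_eq_square power_mult_distrib)
    then show ?thesis by (simp add: scaleC_mult_scaleC)
  qed
  have inv_pm: "invertible_el (1 - ?w j)" "invertible_el (1 + ?w j)" if "j < n" for j
  proof -
    have "j < 2 ^ Suc k" "j + n < 2 ^ Suc k" using that unfolding nn by simp_all
    then show "invertible_el (1 - ?w j)" "invertible_el (1 + ?w j)"
      using Suc.prems neg[of j] by auto
  qed
  have "\<forall>j<2 ^ k. invertible_el (1 - scaleC (unit_root k ^ j) (u * u))"
    using inv_el_one_minus_plus(1)[OF inv_pm] sq by (simp add: n_def)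
  note IH = Suc.IH[OF this, unfolded n_def[symmetric]]
  have pw: "(u * u) ^ n = u ^ (2 ^ Suc k)"
    by (simp add: n_def power2_eq_square[symmetric] power_mult[symmetric] mult.commute)
  have "(\<Sum>j<2 ^ Suc k. inv_el (1 - ?w j)) = (\<Sum>j<n. inv_el (1 - ?w j) + inv_el (1 + ?w j))"
    unfolding nn sum_lessThan_add by (simp add: neg sum.distrib)
  also have "\<dots> = (\<Sum>j<n. 2 *\<^sub>R inv_el (1 - scaleC (unit_root k ^ j) (u * u)))"
    by (rule sum.cong) (simp_all add: inv_el_one_minus_plus(2)[OF inv_pm] sq)
  also have "\<dots> = 2 *\<^sub>R n *\<^sub>R inv_el (1 - u ^ (2 ^ Suc k))"
    using IH pw by (simp add: n_def scaleR_sum_right[symmetric])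
  finally show ?case using IH pw by (simp add: n_def)
qed

lemma norm_resolvent_diff_le:
  assumes "invertible_el (1 - scaleC z b)" "invertible_el (1 - scaleC w b)"
    and "norm (inv_el (1 - scaleC z b)) \<le> M" "norm (inv_el (1 - scaleC w b)) \<le> M"
  shows "norm (inv_el (1 - scaleC z b) - inv_el (1 - scaleC w b)) \<le> M * M * norm b * cmod (z - w)"
proof -
  let ?F = "\<lambda>z. inv_el (1 - scaleC z b)"
  have "?F z * ((1 - scaleC w b) - (1 - scaleC z b)) * ?F w
      = ?F z * (1 - scaleC w b) * ?F w - ?F z * (1 - scaleC z b) * ?F w"
    by (simp add: algebra_simps)
  also have "\<dots> = ?F z - ?F w" using assms by (simp add: mult.assoc)
  finally have "?F z - ?F w = ?F z * scaleC (z - w) b * ?F w" by (simp add: scaleC_diff_left)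
  then have "norm (?F z - ?F w) \<le> norm (?F z) * norm (scaleC (z - w) b) * norm (?F w)"
    by (metis norm_mult3_ineq)
  also have "\<dots> \<le> M * (cmod (z - w) * norm b) * M"
    using assms(3,4) order_trans[OF norm_ge_zero assms(3)] by (intro mult_mono) simp_all
  finally show ?thesis by (simp add: mult_ac)
qed

text \<open>
  With \<open>n = 2\<^sup>k\<close>, \<open>v = b\<^sup>n\<close> and \<open>\<eta>\<^sup>n = -1\<close>, the averages of the resolvent over the roots of unity
  \<open>\<omega>\<^sup>j\<close> and over their rotations \<open>\<omega>\<^sup>j\<eta>\<close> are \<open>(1 - v)\<^sup>-\<^sup>1\<close> and \<open>(1 + v)\<^sup>-\<^sup>1\<close>. The Lipschitz bound
  makes them \<open>M\<^sup>2|1 - \<eta>|\<close>-close, while \<open>\<parallel>v\<parallel> = 1\<close> keeps them apart.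
\<close>

lemma resolvent_rotation_gap:
  assumes sb: "star b = b" and nb: "norm b = 1"
    and inv: "\<And>z. cmod z = 1 \<Longrightarrow> invertible_el (1 - scaleC z b)"
    and M: "\<And>z. cmod z = 1 \<Longrightarrow> norm (inv_el (1 - scaleC z b)) \<le> M"
  shows "1 \<le> 2 * (M * M) * cmod (1 - unit_root (Suc k))"
proof -
  define F where "F z = inv_el (1 - scaleC z b)" for z
  define n :: nat where "n = 2 ^ k"
  define \<eta> where "\<eta> = unit_root (Suc k)"
  define v where "v = b ^ n"
  have lip: "norm (F z - F z') \<le> M * M * cmod (z - z')" if "cmod z = 1" "cmod z' = 1" for z z'
    using norm_resolvent_diff_le[OF inv[OF that(1)] inv[OF that(2)] M[OF that(1)] M[OF that(2)]] nb
    by (simp add: F_def)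
  have nv: "norm v = 1" unfolding v_def n_def using norm_power_two_selfadjoint[OF sb, of k] nb by simp
  have eta: "cmod \<eta> = 1" using norm_unit_root_power[of "Suc k" 1] by (simp add: \<eta>_def)
  have RA: "invertible_el (1 - v)" "(\<Sum>j<n. F (unit_root k ^ j)) = real n *\<^sub>R inv_el (1 - v)"
    using resolvent_average_unit_roots[of k b] inv norm_unit_root_power by (auto simp: F_def v_def n_def)
  have "\<forall>j<2 ^ k. invertible_el (1 - scaleC (unit_root k ^ j) (scaleC \<eta> b))"
    using inv eta norm_unit_root_power by (simp add: norm_mult)
  moreover have "(scaleC \<eta> b) ^ n = - v"
    by (simp add: power_scaleC unit_root_Suc_power_half v_def \<eta>_def n_def)
  ultimately have RB: "invertible_el (1 + v)" "(\<Sum>j<n. F (unit_root k ^ j * \<eta>)) = real n *\<^sub>R inv_el (1 + v)"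
    using resolvent_average_unit_roots[of k "scaleC \<eta> b"] by (simp_all add: F_def n_def mult.commute)
  have "real n * norm (inv_el (1 - v) - inv_el (1 + v))
        = norm (\<Sum>j<n. F (unit_root k ^ j) - F (unit_root k ^ j * \<eta>))"
    using RA(2) RB(2) by (simp add: sum_subtractf flip: scaleR_diff_right)
  also have "\<dots> \<le> (\<Sum>j<n. norm (F (unit_root k ^ j) - F (unit_root k ^ j * \<eta>)))"
    by (rule norm_sum)
  also have "\<dots> \<le> (\<Sum>j<n. M * M * cmod (1 - \<eta>))"
  proof (rule sum_mono)
    fix j
    have "norm (F (unit_root k ^ j) - F (unit_root k ^ j * \<eta>)) \<le> M * M * cmod (unit_root k ^ j * (1 - \<eta>))"
      using lip norm_unit_root_power eta by (simp add: norm_mult right_diff_distrib)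
    then show "norm (F (unit_root k ^ j) - F (unit_root k ^ j * \<eta>)) \<le> M * M * cmod (1 - \<eta>)"
      by (simp add: norm_mult norm_unit_root_power)
  qed
  finally have "norm (inv_el (1 - v) - inv_el (1 + v)) \<le> M * M * cmod (1 - \<eta>)"
    by (simp add: n_def)
  then show ?thesis
    using norm_inv_el_one_minus_diff_ge[OF RA(1) RB(1) nv] by (simp add: \<eta>_def)
qed

lemma selfadjoint_unit_spectrum:
  assumes sb: "star b = b" and nb: "norm b = 1"
  shows "\<exists>z. cmod z = 1 \<and> \<not> invertible_el (1 - scaleC z b)"
proof (rule ccontr)
  assume "\<not> ?thesis"
  then have inv: "\<And>z. cmod z = 1 \<Longrightarrow> invertible_el (1 - scaleC z b)" by blast
  have "continuous_on (sphere 0 1) (\<lambda>z. inv_el (1 - scaleC z b))"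
    unfolding continuous_on_def
  proof
    fix z assume "z \<in> sphere (0::complex) 1"
    then show "((\<lambda>z. inv_el (1 - scaleC z b)) \<longlongrightarrow> inv_el (1 - scaleC z b)) (at z within sphere 0 1)"
      using inv by (intro tendsto_inv_el tendsto_diff tendsto_const
          bounded_linear.tendsto[OF bounded_linear_scaleC_left] tendsto_ident_at) auto
  qed
  then have "bounded ((\<lambda>z. inv_el (1 - scaleC z b)) ` sphere 0 1)"
    by (intro compact_imp_bounded compact_continuous_image compact_sphere)
  then obtain M where M: "M > 0" "\<And>z. cmod z = 1 \<Longrightarrow> norm (inv_el (1 - scaleC z b)) \<le> M"
    unfolding bounded_pos by auto
  have "0 < 1 / (2 * (M * M))" using M by simp
  then obtain k where "dist (unit_root (Suc k)) 1 < 1 / (2 * (M * M))"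
    using LIMSEQ_Suc[OF unit_root_tendsto_one] unfolding tendsto_iff eventually_sequentially by blast
  then have "2 * (M * M) * cmod (1 - unit_root (Suc k)) < 1"
    using M by (simp add: dist_norm norm_minus_commute field_simps)
  then show False using resolvent_rotation_gap[OF sb nb inv M(2)] by (meson not_le)
qed

lemma selfadjoint_spectral_radius:
  assumes sb: "star b = b" and b0: "b \<noteq> 0"
  shows "\<exists>z. cmod z = norm b \<and> \<not> invertible_el (b - scaleC z 1)"
proof -
  define N where "N = norm b"
  have N: "N > 0" using b0 by (simp add: N_def)
  define b' where "b' = (1 / N) *\<^sub>R b"
  have "star b' = b'" "norm b' = 1" using sb N by (simp_all add: b'_def N_def)
  then obtain w where w: "cmod w = 1" "\<not> invertible_el (1 - scaleC w b')"
    using selfadjoint_unit_spectrum by blast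
  define z where "z = complex_of_real N / w"
  have w0: "w \<noteq> 0" using w by auto
  have "1 - scaleC w b' = scaleC (- (w / complex_of_real N)) (b - scaleC z 1)"
    using w0 N by (simp add: b'_def z_def scaleC_diff_right scaleC_minus_left scaleC_scaleR
        flip: scaleC_of_real)
  then have "\<not> invertible_el (b - scaleC z 1)" using w(2) invertible_el_scaleC[of "b - scaleC z 1"] w0 N
    by auto
  moreover have "cmod z = norm b" using w N by (simp add: z_def norm_divide N_def)
  ultimately show ?thesis by blast
qed

section \<open>Positive elements\<close>

abbreviation positive_el :: "'a \<Rightarrow> bool" where
  "positive_el a \<equiv> positive_in scaleC star UNIV a"

lemma positive_el_iff:
  "positive_el a \<longleftrightarrow> star a = a \<and> (\<forall>z. \<not> invertible_el (a - scaleC z 1) \<longrightarrow> Im z = 0 \<and> Re z \<ge> 0)"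
  unfolding positive_in_def spec_in_def invertible_el_def by auto

lemma positive_elI:
  "star a = a \<Longrightarrow> (\<And>z. \<not> invertible_el (a - scaleC z 1) \<Longrightarrow> Im z = 0 \<and> Re z \<ge> 0) \<Longrightarrow> positive_el a"
  unfolding positive_el_iff by blast

lemma positive_el_selfadjoint: "positive_el a \<Longrightarrow> star a = a"
  unfolding positive_el_iff by blast

lemma positive_el_spectrum: "positive_el a \<Longrightarrow> \<not> invertible_el (a - scaleC z 1) \<Longrightarrow> Im z = 0 \<and> Re z \<ge> 0"
  unfolding positive_el_iff by blast

lemma le_in_UNIV_iff: "le_in scaleC star UNIV a b \<longleftrightarrow> star a = a \<and> star b = b \<and> positive_el (b - a)"
  unfolding le_in_def by simp

lemma le_in_UNIV_intro: "star a = a \<Longrightarrow> star b = b \<Longrightarrow> positive_el (b - a) \<Longrightarrow> le_in scaleC star UNIV a b"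
  by (simp add: le_in_UNIV_iff)

lemma positive_el_norm_le:
  assumes "positive_el b" "positive_el (\<mu> *\<^sub>R 1 - b)" shows "norm b \<le> \<mu>"
proof (cases "b = 0")
  case True
  have "\<not> invertible_el (\<mu> *\<^sub>R 1 - b - scaleC (complex_of_real \<mu>) 1)"
    using True not_invertible_el_zero by simp
  then show ?thesis using positive_el_spectrum[OF assms(2)] True by fastforce
next
  case False
  obtain z where z: "cmod z = norm b" "\<not> invertible_el (b - scaleC z 1)"
    using selfadjoint_spectral_radius[OF positive_el_selfadjoint[OF assms(1)] False] by blast
  have zr: "Im z = 0" "Re z \<ge> 0" using positive_el_spectrum[OF assms(1) z(2)] by auto
  have eq: "\<mu> *\<^sub>R 1 - b - scaleC (complex_of_real \<mu> - z) 1 = - (b - scaleC z 1)"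
    by (simp add: scaleC_diff_left)
  have "\<not> invertible_el (\<mu> *\<^sub>R 1 - b - scaleC (complex_of_real \<mu> - z) 1)"
    unfolding eq invertible_el_minus_iff by (rule z(2))
  then have "Re (complex_of_real \<mu> - z) \<ge> 0" using positive_el_spectrum[OF assms(2)] by blast
  moreover have "cmod z = Re z" using zr by (simp add: cmod_def)
  ultimately show ?thesis using z(1) by simp
qed

lemma positive_elI_norm:
  assumes sa: "star a = a" and l: "0 \<le> l" and n: "norm (l *\<^sub>R 1 - a) \<le> l" shows "positive_el a"
proof (rule positive_elI[OF sa])
  fix z assume ni: "\<not> invertible_el (a - scaleC z 1)"
  have im: "Im z = 0" using invertible_el_selfadjoint_nonreal[OF sa] ni by blast
  have "Re z \<ge> 0"
  proof (rule ccontr)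
    assume "\<not> Re z \<ge> 0"
    then have pl: "l - Re z > 0" using l by simp
    define y where "y = (1 / (l - Re z)) *\<^sub>R (l *\<^sub>R 1 - a)"
    have "norm y = norm (l *\<^sub>R 1 - a) / (l - Re z)" using pl by (simp add: y_def)
    also have "\<dots> \<le> l / (l - Re z)" using n pl by (simp add: divide_right_mono)
    also have "\<dots> < 1" using pl \<open>\<not> Re z \<ge> 0\<close> by simp
    finally have ny: "norm y < 1" .
    have zz: "scaleC z 1 = Re z *\<^sub>R 1" using im scaleC_one_Re_Im by simp
    have "(l - Re z) *\<^sub>R y = l *\<^sub>R 1 - a" using pl by (simp add: y_def)
    then have "(l - Re z) *\<^sub>R (1 - y) = (l - Re z) *\<^sub>R 1 - (l *\<^sub>R 1 - a)"
      by (simp add: scaleR_diff_right)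
    then have "a - scaleC z 1 = (l - Re z) *\<^sub>R (1 - y)" by (simp add: zz algebra_simps)
    then have "invertible_el (a - scaleC z 1)"
      using invertible_el_scaleR[OF invertible_el_one_minus(1)[OF ny]] pl by simp
    then show False using ni by simp
  qed
  then show "Im z = 0 \<and> Re z \<ge> 0" using im by simp
qed

lemma positive_el_shift: assumes "positive_el a" "norm a \<le> \<mu>" shows "positive_el (\<mu> *\<^sub>R 1 - a)"
proof (rule positive_elI)
  show "star (\<mu> *\<^sub>R 1 - a) = \<mu> *\<^sub>R 1 - a" using positive_el_selfadjoint[OF assms(1)] by simp
  fix z assume ni: "\<not> invertible_el (\<mu> *\<^sub>R 1 - a - scaleC z 1)"
  have "\<mu> *\<^sub>R 1 - a - scaleC z 1 = - (a - scaleC (complex_of_real \<mu> - z) 1)"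
    by (simp add: scaleC_diff_left)
  then have ni2: "\<not> invertible_el (a - scaleC (complex_of_real \<mu> - z) 1)"
    using ni invertible_el_minus_iff by metis
  have s: "Im (complex_of_real \<mu> - z) = 0" "Re (complex_of_real \<mu> - z) \<ge> 0"
    using positive_el_spectrum[OF assms(1) ni2] by auto
  have "Re (complex_of_real \<mu> - z) \<le> \<mu>"
    using spectrum_norm_bound[OF ni2] assms(2) complex_Re_le_cmod[of "complex_of_real \<mu> - z"] by linarith
  then show "Im z = 0 \<and> Re z \<ge> 0" using s by simp
qed

lemma norm_positive_el_shift: assumes "positive_el a" "norm a \<le> \<mu>" shows "norm (\<mu> *\<^sub>R 1 - a) \<le> \<mu>"
  using positive_el_norm_le[OF positive_el_shift[OF assms]] positive_el_selfadjoint[OF assms(1)] assms(1)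
  by simp

lemma positive_el_add: assumes "positive_el a" "positive_el b" shows "positive_el (a + b)"
proof (rule positive_elI_norm)
  show "star (a + b) = a + b"
    using positive_el_selfadjoint[OF assms(1)] positive_el_selfadjoint[OF assms(2)] by simp
  have "(norm a + norm b) *\<^sub>R 1 - (a + b) = (norm a *\<^sub>R 1 - a) + (norm b *\<^sub>R 1 - b)"
    by (simp add: algebra_simps)
  then have "norm ((norm a + norm b) *\<^sub>R 1 - (a + b)) \<le> norm (norm a *\<^sub>R 1 - a) + norm (norm b *\<^sub>R 1 - b)"
    by (metis norm_triangle_ineq)
  also have "\<dots> \<le> norm a + norm b"
    using norm_positive_el_shift[OF assms(1)] norm_positive_el_shift[OF assms(2)] by (simp add: add_mono)
  finally show "norm ((norm a + norm b) *\<^sub>R 1 - (a + b)) \<le> norm a + norm b" .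
qed simp

lemma positive_el_scaleR: assumes "positive_el a" "0 \<le> r" shows "positive_el (r *\<^sub>R a)"
proof (rule positive_elI_norm)
  show "star (r *\<^sub>R a) = r *\<^sub>R a" using positive_el_selfadjoint[OF assms(1)] by simp
  show "0 \<le> r * norm a" using assms by simp
  have "(r * norm a) *\<^sub>R 1 - r *\<^sub>R a = r *\<^sub>R (norm a *\<^sub>R 1 - a)" by (simp add: algebra_simps)
  then have "norm ((r * norm a) *\<^sub>R 1 - r *\<^sub>R a) = r * norm (norm a *\<^sub>R 1 - a)" using assms by simp
  also have "\<dots> \<le> r * norm a" using norm_positive_el_shift[OF assms(1)] assms(2) by (simp add: mult_left_mono)
  finally show "norm ((r * norm a) *\<^sub>R 1 - r *\<^sub>R a) \<le> r * norm a" .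
qed

lemma positive_el_zero[simp]: "positive_el 0"
  by (rule positive_elI_norm[of 0 0]) simp_all

lemma positive_el_one[simp]: "positive_el 1"
  by (rule positive_elI_norm[of 1 1]) simp_all

lemma positive_el_antisym: "positive_el a \<Longrightarrow> positive_el (- a) \<Longrightarrow> a = 0"
  using positive_el_norm_le[of a 0] by simp

lemma positive_el_projection: assumes "star p = p" "p * p = p" shows "positive_el p"
proof (rule positive_elI_norm[of p 1])
  have "star (1 - p) * (1 - p) = 1 - p" using assms by (simp add: algebra_simps)
  then have "norm (1 - p) ^ 2 = norm (1 - p)" using norm_star_mult_self[of "1 - p"] by simp
  then have "norm (1 - p) = 0 \<or> norm (1 - p) = 1" by (simp add: power2_eq_square)
  then show "norm (1 *\<^sub>R 1 - p) \<le> 1" by auto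
qed (simp_all add: assms)

lemma positive_el_square: assumes sa: "star h = h" shows "positive_el (h * h)"
proof (rule positive_elI)
  show "star (h * h) = h * h" using sa by simp
  fix z assume ni: "\<not> invertible_el (h * h - scaleC z 1)"
  define s where "s = csqrt z"
  have ss: "s * s = z" using power2_csqrt[of z] by (simp add: s_def power2_eq_square)
  have "(h - scaleC s 1) * (h - scaleC (- s) 1) = h * h - h * scaleC (- s) 1 - scaleC s 1 * h + scaleC s 1 * scaleC (- s) 1"
    by (simp add: algebra_simps)
  also have "\<dots> = h * h - scaleC z 1"
    by (simp add: scaleC_one_mult mult_scaleC_one scaleC_mult_scaleC scaleC_minus_left ss)
  finally have e: "h * h - scaleC z 1 = (h - scaleC s 1) * (h - scaleC (- s) 1)" by simp
  have "Im s = 0"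
  proof (rule ccontr)
    assume "Im s \<noteq> 0"
    then have "invertible_el ((h - scaleC s 1) * (h - scaleC (- s) 1))"
      by (intro invertible_el_mult invertible_el_selfadjoint_nonreal[OF sa]) simp_all
    then show False using ni e by simp
  qed
  then have "z = complex_of_real ((Re s) ^ 2)" using ss by (simp add: complex_eq_iff power2_eq_square)
  then show "Im z = 0 \<and> Re z \<ge> 0" by simp
qed

text \<open>The spectrum of \<open>u + v\<close> for orthogonal \<open>u\<close>, \<open>v\<close> contains the nonzero spectrum of \<open>u\<close>.\<close>

lemma positive_el_orthogonal_summand:
  assumes su: "star u = u" and uv: "u * v = 0" and vu: "v * u = 0" and p: "positive_el (u + v)"
  shows "positive_el u"
proof (rule positive_elI[OF su])
  fix z assume ni: "\<not> invertible_el (u - scaleC z 1)"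
  show "Im z = 0 \<and> Re z \<ge> 0"
  proof (cases "z = 0")
    case False
    have "(u - scaleC z 1) * (v - scaleC z 1) = u * v - u * scaleC z 1 - scaleC z 1 * v + scaleC z 1 * scaleC z 1"
      by (simp add: algebra_simps)
    then have uv_z: "(u - scaleC z 1) * (v - scaleC z 1) = - scaleC z u - scaleC z v + scaleC (z * z) 1"
      by (simp add: uv scaleC_one_mult mult_scaleC_one scaleC_mult_scaleC)
    have "(v - scaleC z 1) * (u - scaleC z 1) = v * u - v * scaleC z 1 - scaleC z 1 * u + scaleC z 1 * scaleC z 1"
      by (simp add: algebra_simps)
    then have vu_z: "(v - scaleC z 1) * (u - scaleC z 1) = - scaleC z u - scaleC z v + scaleC (z * z) 1"
      by (simp add: vu scaleC_one_mult mult_scaleC_one scaleC_mult_scaleC)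
    have "\<not> invertible_el (u + v - scaleC z 1)"
    proof
      assume i: "invertible_el (u + v - scaleC z 1)"
      have "(u - scaleC z 1) * (v - scaleC z 1) = scaleC (- z) (u + v - scaleC z 1)"
        unfolding uv_z by (simp add: scaleC_diff_right scaleC_add_right scaleC_minus_left)
      then have "invertible_el ((u - scaleC z 1) * (v - scaleC z 1))"
        using invertible_el_scaleC[OF i, of "- z"] False by simp
      moreover have "(u - scaleC z 1) * (v - scaleC z 1) = (v - scaleC z 1) * (u - scaleC z 1)"
        using uv_z vu_z by simp
      ultimately show False using invertible_el_commuting_factor ni by blast
    qed
    then show ?thesis using positive_el_spectrum[OF p] by blast
  qed simp
qed

end

section \<open>Square roots\<close>

definition sqrt_coeff :: "nat \<Rightarrow> real" where "sqrt_coeff n = ((1/2::real) gchoose n) * (-1) ^ n"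

lemma gbinomial_half_nonneg: "0 \<le> ((real m - 1/2) gchoose m)"
proof -
  have "((real m - 1/2) gchoose m) = pochhammer (real m - 1/2 - real m + 1) m / fact m"
    by (rule gbinomial_pochhammer')
  also have "\<dots> = pochhammer (1/2) m / fact m" by simp
  finally show ?thesis using pochhammer_pos[of "1/2::real" m] by simp
qed

lemma sum_sqrt_coeff: "(\<Sum>k\<le>m. sqrt_coeff k) = ((real m - 1/2) gchoose m)"
proof -
  have "(\<Sum>k\<le>m. sqrt_coeff k) = (- 1) ^ m * ((1/2::real) - 1 gchoose m)"
    unfolding sqrt_coeff_def by (rule gbinomial_sum_lower_neg)
  also have "(1/2::real) - 1 = - (1/2)" by simp
  also have "(- (1/2::real)) gchoose m = (-1) ^ m * ((1/2 + real m - 1) gchoose m)"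
    by (rule gbinomial_minus)
  also have "(1/2 + real m - 1) = real m - 1/2" by simp
  finally show ?thesis by (simp flip: power_mult_distrib)
qed

lemma sqrt_coeff_nonpos: assumes "n \<ge> 1" shows "sqrt_coeff n \<le> 0"
proof -
  obtain m where n: "n = Suc m" using assms by (cases n) auto
  have "((1/2::real) gchoose Suc m) = ((1/2) / real (Suc m)) * ((1/2 - 1) gchoose m)"
    using gbinomial_absorption'[of "Suc m" "1/2::real"] by simp
  also have "(1/2::real) - 1 = - (1/2)" by simp
  also have "(- (1/2::real)) gchoose m = (-1) ^ m * ((1/2 + real m - 1) gchoose m)"
    by (rule gbinomial_minus)
  also have "(1/2 + real m - 1) = real m - 1/2" by simp
  finally have "sqrt_coeff n = - (((1/2) / real (Suc m)) * ((real m - 1/2) gchoose m))"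
    unfolding sqrt_coeff_def n by (simp flip: power_mult_distrib)
  then show ?thesis using gbinomial_half_nonneg[of m] by simp
qed

lemma sum_abs_sqrt_coeff_Suc_le: "(\<Sum>k<m. \<bar>sqrt_coeff (Suc k)\<bar>) \<le> 1"
proof -
  have "(\<Sum>k<m. \<bar>sqrt_coeff (Suc k)\<bar>) = 1 - (\<Sum>k\<le>m. sqrt_coeff k)"
  proof (induction m)
    case (Suc m)
    then show ?case using sqrt_coeff_nonpos[of "Suc m"] by simp
  qed (simp add: sqrt_coeff_def)
  then show ?thesis using sum_sqrt_coeff[of m] gbinomial_half_nonneg[of m] by simp
qed

lemma summable_abs_sqrt_coeff_Suc: "summable (\<lambda>k. \<bar>sqrt_coeff (Suc k)\<bar>)"
  by (rule summableI_nonneg_bounded[where x = 1]) (simp_all add: sum_abs_sqrt_coeff_Suc_le)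

lemma summable_abs_sqrt_coeff: "summable (\<lambda>k. \<bar>sqrt_coeff k\<bar>)"
  by (subst summable_Suc_iff[symmetric]) (rule summable_abs_sqrt_coeff_Suc)

lemma suminf_abs_sqrt_coeff_Suc_le: "(\<Sum>k. \<bar>sqrt_coeff (Suc k)\<bar>) \<le> 1"
  by (rule suminf_le_const[OF summable_abs_sqrt_coeff_Suc sum_abs_sqrt_coeff_Suc_le])

lemma sqrt_coeff_convolution: "(\<Sum>i\<le>n. sqrt_coeff i * sqrt_coeff (n - i)) = ((1::real) gchoose n) * (-1) ^ n"
proof -
  have "(\<Sum>i\<le>n. sqrt_coeff i * sqrt_coeff (n - i))
      = (\<Sum>i=0..n. ((1/2::real) gchoose i) * ((1/2) gchoose (n - i)) * (-1) ^ n)"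
    unfolding sqrt_coeff_def atMost_atLeast0
  proof (rule sum.cong)
    fix i assume "i \<in> {0..n}"
    then have "(-1::real) ^ i * (-1) ^ (n - i) = (-1) ^ n" by (simp flip: power_add)
    then show "((1::real) / 2 gchoose i) * (- 1) ^ i * ((1 / 2 gchoose (n - i)) * (- 1) ^ (n - i)) =
       (1 / 2 gchoose i) * (1 / 2 gchoose (n - i)) * (- 1) ^ n"
      by (metis mult.assoc mult.left_commute)
  qed simp
  also have "\<dots> = (\<Sum>i=0..n. ((1/2::real) gchoose i) * ((1/2) gchoose (n - i))) * (-1) ^ n"
    by (simp add: sum_distrib_right)
  also have "\<dots> = ((1/2 + 1/2::real) gchoose n) * (-1) ^ n" by (simp only: gbinomial_Vandermonde)
  finally show ?thesis by simp
qed

lemma gbinomial_one_eq_0: "n \<ge> 2 \<Longrightarrow> ((1::real) gchoose n) = 0"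
  using binomial_gbinomial[of 1 n] by (simp add: binomial_eq_0)

context cstar
begin

definition sqrt_series :: "'a \<Rightarrow> 'a" where "sqrt_series x = (\<Sum>n. sqrt_coeff n *\<^sub>R x ^ n)"

lemma summable_norm_sqrt_series:
  fixes x :: 'a assumes "norm x \<le> 1" shows "summable (\<lambda>n. norm (sqrt_coeff n *\<^sub>R x ^ n))"
proof (rule summable_comparison_test[OF _ summable_abs_sqrt_coeff])
  have "norm (x ^ n) \<le> 1" for n
    using norm_power_ineq[of x n] assms by (meson order_trans power_le_one norm_ge_zero)
  then show "\<exists>N. \<forall>n\<ge>N. norm (norm (sqrt_coeff n *\<^sub>R x ^ n)) \<le> \<bar>sqrt_coeff n\<bar>"
    by (simp add: mult_left_le)
qed

lemma sqrt_series_square: assumes "norm x \<le> 1" shows "sqrt_series x * sqrt_series x = 1 - x"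
proof -
  have "sqrt_series x * sqrt_series x
      = (\<Sum>n. \<Sum>i\<le>n. (sqrt_coeff i *\<^sub>R x ^ i) * (sqrt_coeff (n - i) *\<^sub>R x ^ (n - i)))"
    unfolding sqrt_series_def
    by (rule Cauchy_product[OF summable_norm_sqrt_series[OF assms] summable_norm_sqrt_series[OF assms]])
  also have "\<dots> = (\<Sum>n. (((1::real) gchoose n) * (-1) ^ n) *\<^sub>R x ^ n)"
  proof (rule suminf_cong)
    fix n
    have "(\<Sum>i\<le>n. (sqrt_coeff i *\<^sub>R x ^ i) * (sqrt_coeff (n - i) *\<^sub>R x ^ (n - i)))
        = (\<Sum>i\<le>n. (sqrt_coeff i * sqrt_coeff (n - i)) *\<^sub>R x ^ n)"
      by (rule sum.cong) (simp_all flip: power_add)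
    then show "(\<Sum>i\<le>n. (sqrt_coeff i *\<^sub>R x ^ i) * (sqrt_coeff (n - i) *\<^sub>R x ^ (n - i)))
        = (((1::real) gchoose n) * (-1) ^ n) *\<^sub>R x ^ n"
      by (simp add: sqrt_coeff_convolution flip: scaleR_sum_left)
  qed
  also have "\<dots> = (\<Sum>n\<in>{0, 1}. (((1::real) gchoose n) * (-1) ^ n) *\<^sub>R x ^ n)"
    by (rule suminf_finite) (auto simp: gbinomial_one_eq_0)
  also have "\<dots> = 1 - x" by simp
  finally show ?thesis .
qed

lemma norm_one_minus_sqrt_series: assumes "norm x \<le> 1" shows "norm (1 - sqrt_series x) \<le> 1"
proof -
  have s: "summable (\<lambda>n. sqrt_coeff n *\<^sub>R x ^ n)"
    using summable_norm_cancel[OF summable_norm_sqrt_series[OF assms]] .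
  have st: "summable (\<lambda>n. norm (sqrt_coeff (Suc n) *\<^sub>R x ^ Suc n))"
    using summable_ignore_initial_segment[OF summable_norm_sqrt_series[OF assms], of 1] by simp
  have "(\<Sum>n. sqrt_coeff (Suc n) *\<^sub>R x ^ Suc n) = sqrt_series x - 1"
    using suminf_split_head[OF s] by (simp add: sqrt_series_def sqrt_coeff_def)
  then have "norm (1 - sqrt_series x) = norm (\<Sum>n. sqrt_coeff (Suc n) *\<^sub>R x ^ Suc n)"
    by (metis norm_minus_commute)
  also have "\<dots> \<le> (\<Sum>n. norm (sqrt_coeff (Suc n) *\<^sub>R x ^ Suc n))" by (rule summable_norm[OF st])
  also have "\<dots> \<le> (\<Sum>n. \<bar>sqrt_coeff (Suc n)\<bar>)"
  proof (rule suminf_le[OF _ st summable_abs_sqrt_coeff_Suc])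
    fix n
    have "norm (x ^ Suc n) \<le> 1"
      using norm_power_ineq[of x "Suc n"] assms by (meson order_trans power_le_one norm_ge_zero)
    then show "norm (sqrt_coeff (Suc n) *\<^sub>R x ^ Suc n) \<le> \<bar>sqrt_coeff (Suc n)\<bar>"
      by (simp add: mult_left_le)
  qed
  also have "\<dots> \<le> 1" by (rule suminf_abs_sqrt_coeff_Suc_le)
  finally show ?thesis .
qed

lemma star_sqrt_series: assumes "norm x \<le> 1" "star x = x" shows "star (sqrt_series x) = sqrt_series x"
  using star_suminf[OF summable_norm_cancel[OF summable_norm_sqrt_series[OF assms(1)]]] assms(2)
  by (simp add: sqrt_series_def star_power)

lemma sqrt_series_commute: assumes "norm x \<le> 1" "y * x = x * y" shows "y * sqrt_series x = sqrt_series x * y"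
proof -
  have s: "summable (\<lambda>n. sqrt_coeff n *\<^sub>R x ^ n)"
    using summable_norm_cancel[OF summable_norm_sqrt_series[OF assms(1)]] .
  have "y * x ^ n = x ^ n * y" for n
    using assms(2) by (metis power_commuting_commutes)
  then show ?thesis unfolding sqrt_series_def suminf_mult[OF s, symmetric] suminf_mult2[OF s]
    by simp
qed

text \<open>For \<open>a \<ge> 0\<close> one has \<open>\<parallel>1 - a/\<parallel>a\<parallel>\<parallel> \<le> 1\<close>, so the binomial series applies.\<close>

definition pos_sqrt :: "'a \<Rightarrow> 'a" where
  "pos_sqrt a = (if a = 0 then 0 else sqrt (norm a) *\<^sub>R sqrt_series (1 - (1 / norm a) *\<^sub>R a))"

lemma pos_sqrt_properties:
  assumes a: "positive_el a"
  shows "pos_sqrt a * pos_sqrt a = a \<and> positive_el (pos_sqrt a) \<and>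
    (\<forall>y. y * a = a * y \<longrightarrow> y * pos_sqrt a = pos_sqrt a * y)"
proof (cases "a = 0")
  case False
  define N where "N = norm a"
  have N: "N > 0" using False by (simp add: N_def)
  define x where "x = 1 - (1 / N) *\<^sub>R a"
  have sx: "star x = x" using positive_el_selfadjoint[OF a] by (simp add: x_def)
  have "x = (1 / N) *\<^sub>R (N *\<^sub>R 1 - a)" using N by (simp add: x_def algebra_simps)
  then have "norm x = (1 / N) * norm (N *\<^sub>R 1 - a)" using N by simp
  also have "\<dots> \<le> 1" using norm_positive_el_shift[OF a, of N] N by (simp add: N_def)
  finally have nx: "norm x \<le> 1" .
  have ps: "pos_sqrt a = sqrt N *\<^sub>R sqrt_series x" using False by (simp add: pos_sqrt_def N_def x_def)
  have "pos_sqrt a * pos_sqrt a = N *\<^sub>R (1 - x)" using N by (simp add: ps sqrt_series_square[OF nx])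
  also have "\<dots> = a" using N by (simp add: x_def algebra_simps)
  finally have "pos_sqrt a * pos_sqrt a = a" .
  moreover have "positive_el (sqrt_series x)"
    using positive_elI_norm[of _ 1] star_sqrt_series[OF nx sx] norm_one_minus_sqrt_series[OF nx] by simp
  then have "positive_el (pos_sqrt a)" unfolding ps by (rule positive_el_scaleR) (use N in simp)
  moreover have "y * pos_sqrt a = pos_sqrt a * y" if "y * a = a * y" for y
  proof -
    have "y * x = x * y" using that by (simp add: x_def algebra_simps)
    then show ?thesis using sqrt_series_commute[OF nx] by (simp add: ps)
  qed
  ultimately show ?thesis by blast
qed (simp add: pos_sqrt_def)

lemma pos_sqrt_square: "positive_el a \<Longrightarrow> pos_sqrt a * pos_sqrt a = a"
  and positive_el_pos_sqrt: "positive_el a \<Longrightarrow> positive_el (pos_sqrt a)"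
  and pos_sqrt_commute: "positive_el a \<Longrightarrow> y * a = a * y \<Longrightarrow> y * pos_sqrt a = pos_sqrt a * y"
  using pos_sqrt_properties by blast+

lemma star_pos_sqrt: "positive_el a \<Longrightarrow> star (pos_sqrt a) = pos_sqrt a"
  using positive_el_pos_sqrt positive_el_selfadjoint by blast

lemma positive_el_mult_swap:
  assumes p: "positive_el (x * y)" and s: "star (y * x) = y * x" shows "positive_el (y * x)"
proof (rule positive_elI[OF s])
  fix z assume ni: "\<not> invertible_el (y * x - scaleC z 1)"
  show "Im z = 0 \<and> Re z \<ge> 0"
  proof (cases "z = 0")
    case False
    then have "\<not> invertible_el (x * y - scaleC z 1)" using invertible_el_mult_swap ni by blast
    then show ?thesis using positive_el_spectrum[OF p] by blast
  qed simp
qed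

lemma sum_squares_cartesian:
  "\<exists>P Q. star P = P \<and> star Q = Q \<and> y * star y + star y * y = 2 *\<^sub>R (P * P) + 2 *\<^sub>R (Q * Q)"
proof (intro exI conjI)
  let ?P = "(1/2) *\<^sub>R (y + star y)" and ?Q = "(1/2) *\<^sub>R (iunit * (star y - y))"
  show "star ?P = ?P" by (simp add: add.commute)
  show "star ?Q = ?Q" by (simp add: iunit_commute algebra_simps)
  let ?S = "y + star y" and ?D = "star y - y"
  have "iunit * ?D * (iunit * ?D) = (iunit * iunit) * (?D * ?D)"
    by (metis iunit_commute mult.assoc)
  then have "2 *\<^sub>R (?P * ?P) + 2 *\<^sub>R (?Q * ?Q) = (1/2) *\<^sub>R (?S * ?S - ?D * ?D)"
    by (simp add: iunit_square scaleR_diff_right)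
  also have "?S * ?S - ?D * ?D = 2 *\<^sub>R (y * star y + star y * y)"
    by (simp add: algebra_simps scaleR_2)
  finally show "y * star y + star y * y = 2 *\<^sub>R (?P * ?P) + 2 *\<^sub>R (?Q * ?Q)"
    by simp
qed

lemma star_mult_self_eq_zero_if_nonpos: assumes p: "positive_el (- (star y * y))" shows "y = 0"
proof -
  have "positive_el (y * - star y)"
    using positive_el_mult_swap[of "- star y" y] p by simp
  then have neg: "positive_el (- (y * star y))" by simp
  obtain P Q where PQ: "star P = P" "star Q = Q" "y * star y + star y * y = 2 *\<^sub>R (P * P) + 2 *\<^sub>R (Q * Q)"
    using sum_squares_cartesian by blast
  then have "y * star y = 2 *\<^sub>R (P * P) + 2 *\<^sub>R (Q * Q) + - (star y * y)"
    by (simp add: algebra_simps)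
  moreover have "positive_el (2 *\<^sub>R (P * P) + 2 *\<^sub>R (Q * Q) + - (star y * y))"
    by (intro positive_el_add positive_el_scaleR positive_el_square PQ p) simp_all
  ultimately have "positive_el (y * star y)" by simp
  then have "y * star y = 0" using positive_el_antisym neg by blast
  then have "norm y ^ 2 = 0" using norm_mult_star_self[of y] by simp
  then show "y = 0" by simp
qed

lemma selfadjoint_positive_negative_parts:
  assumes sh: "star h = h"
  obtains hp hm where "positive_el hp" "positive_el hm" "hp * hm = 0" "hm * hp = 0" "h = hp - hm"
proof -
  have phh: "positive_el (h * h)" by (rule positive_el_square[OF sh])
  define a where "a = pos_sqrt (h * h)"
  have aa: "a * a = h * h" and pa: "positive_el a" and sa: "star a = a"
    unfolding a_def using pos_sqrt_square positive_el_pos_sqrt star_pos_sqrt phh by blast+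
  have ha: "h * a = a * h" unfolding a_def by (rule pos_sqrt_commute[OF phh]) (simp add: mult.assoc)
  define hp where "hp = (1/2) *\<^sub>R (a + h)"
  define hm where "hm = (1/2) *\<^sub>R (a - h)"
  have "hp * hm = (1/4) *\<^sub>R (a * a - a * h + h * a - h * h)"
    by (simp add: hp_def hm_def algebra_simps)
  then have pm: "hp * hm = 0" by (simp add: aa ha)
  have "hm * hp = (1/4) *\<^sub>R (a * a + a * h - h * a - h * h)"
    by (simp add: hp_def hm_def algebra_simps)
  then have mp: "hm * hp = 0" by (simp add: aa ha)
  have "hp + hm = a" by (simp add: hp_def hm_def algebra_simps flip: scaleR_2)
  then have "positive_el hp" "positive_el hm"
    using positive_el_orthogonal_summand[of hp hm] positive_el_orthogonal_summand[of hm hp] pm mp pa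
    by (simp_all add: hp_def hm_def sa sh add.commute)
  moreover have "h = hp - hm" by (simp add: hp_def hm_def algebra_simps flip: scaleR_2)
  ultimately show ?thesis using that pm mp by blast
qed

text \<open>
  Write \<open>y\<^sup>*y = h\<^sub>+ - h\<^sub>-\<close>. For \<open>w = y h\<^sub>-\<close> one gets \<open>-w\<^sup>*w = h\<^sub>-\<^sup>3 \<ge> 0\<close>, which forces \<open>w = 0\<close>, so
  \<open>h\<^sub>-\<^sup>3 = 0\<close> and hence \<open>h\<^sub>- = 0\<close>.
\<close>

lemma positive_el_star_mult_self: "positive_el (star y * y)"
proof -
  have "star (star y * y) = star y * y" by simp
  then obtain hp hm where php: "positive_el hp" and phm: "positive_el hm"
    and mp: "hm * hp = 0" and h: "star y * y = hp - hm"
    using selfadjoint_positive_negative_parts by metis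
  have shm: "star hm = hm" by (rule positive_el_selfadjoint[OF phm])
  define e where "e = pos_sqrt hm"
  have ee: "e * e = hm" and se: "star e = e"
    unfolding e_def using pos_sqrt_square star_pos_sqrt phm by blast+
  define w where "w = y * hm"
  have "star w * w = hm * (star y * y) * hm" by (simp add: w_def shm mult.assoc)
  also have "\<dots> = hm * (hp - hm) * hm" by (simp only: h)
  also have "\<dots> = - (hm * hm * hm)" by (simp add: algebra_simps mp)
  finally have sww: "star w * w = - (hm * hm * hm)" .
  have "hm * hm * hm = (e * e * e) * (e * e * e)" by (simp add: ee[symmetric] mult.assoc)
  moreover have "star (e * e * e) = e * e * e" by (simp add: se mult.assoc)
  ultimately have "positive_el (- (star w * w))" using positive_el_square sww by simp
  then have "w = 0" by (rule star_mult_self_eq_zero_if_nonpos)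
  then have "hm ^ (2 ^ 2) = 0" using sww by (simp add: numeral_eq_Suc mult.assoc)
  then have "hm = 0" using norm_power_two_selfadjoint[OF shm, of 2] by simp
  then show ?thesis using php h by simp
qed

lemma positive_el_congruence: assumes p: "positive_el a" shows "positive_el (star x * a * x)"
proof -
  have "star (pos_sqrt a * x) * (pos_sqrt a * x) = star x * (pos_sqrt a * pos_sqrt a) * x"
    using star_pos_sqrt[OF p] by (simp add: mult.assoc)
  then show ?thesis using pos_sqrt_square[OF p] positive_el_star_mult_self by metis
qed

section \<open>Inverses and the order\<close>

lemma positive_el_inv_el: assumes p: "positive_el a" and i: "invertible_el a" shows "positive_el (inv_el a)"
proof -
  have "inv_el a = star (inv_el a) * a * inv_el a"
    using star_inv_el_selfadjoint[OF i positive_el_selfadjoint[OF p]] i by simp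
  then show ?thesis using positive_el_congruence[OF p, of "inv_el a"] by simp
qed

lemma positive_el_invertible_lower_bound:
  assumes p: "positive_el a" and i: "invertible_el a" shows "\<exists>\<epsilon>>0. positive_el (a - \<epsilon> *\<^sub>R 1)"
proof -
  define \<epsilon> where "\<epsilon> = 1 / norm (inv_el a)"
  have n0: "norm (inv_el a) > 0" using inv_el_nonzero[OF i] by simp
  have "positive_el (a - \<epsilon> *\<^sub>R 1)"
  proof (rule positive_elI)
    show "star (a - \<epsilon> *\<^sub>R 1) = a - \<epsilon> *\<^sub>R 1" using positive_el_selfadjoint[OF p] by simp
    fix z assume ni: "\<not> invertible_el (a - \<epsilon> *\<^sub>R 1 - scaleC z 1)"
    let ?w = "z + complex_of_real \<epsilon>"
    have ni2: "\<not> invertible_el (a - scaleC ?w 1)" using ni by (simp add: scaleC_add_left algebra_simps)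
    have s: "Im ?w = 0" "Re ?w \<ge> 0" using positive_el_spectrum[OF p ni2] by auto
    have "\<not> cmod ?w * norm (inv_el a) < 1"
      using invertible_el_perturb(1)[OF i, of "a - scaleC ?w 1"] ni2 by auto
    then have "cmod ?w \<ge> \<epsilon>" using n0 by (simp add: \<epsilon>_def field_simps)
    moreover have "cmod ?w = Re ?w" using s by (simp add: cmod_def)
    ultimately show "Im z = 0 \<and> Re z \<ge> 0" using s by simp
  qed
  moreover have "\<epsilon> > 0" using n0 by (simp add: \<epsilon>_def)
  ultimately show ?thesis by blast
qed

lemma invertible_el_if_positive_margin:
  assumes "positive_el (a - \<epsilon> *\<^sub>R 1)" "\<epsilon> > 0" shows "invertible_el a"
proof (rule ccontr)
  assume "\<not> invertible_el a"
  then have "\<not> invertible_el (a - \<epsilon> *\<^sub>R 1 - scaleC (complex_of_real (- \<epsilon>)) 1)"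
    by (simp add: scaleC_minus_left)
  then have "Re (complex_of_real (- \<epsilon>)) \<ge> 0" using positive_el_spectrum[OF assms(1)] by blast
  then show False using assms(2) by simp
qed

lemma pos_sqrt_unique:
  assumes p: "positive_el c" and i: "invertible_el c" and py: "positive_el y" and yy: "y * y = c"
  shows "y = pos_sqrt c"
proof -
  define d where "d = pos_sqrt c"
  have dd: "d * d = c" and pd: "positive_el d"
    unfolding d_def using pos_sqrt_square positive_el_pos_sqrt p by blast+
  have yd: "y * d = d * y" unfolding d_def by (rule pos_sqrt_commute[OF p]) (simp add: yy[symmetric] mult.assoc)
  obtain \<epsilon> where e: "\<epsilon> > 0" "positive_el (y - \<epsilon> *\<^sub>R 1)"
    using positive_el_invertible_lower_bound[OF py invertible_el_if_square[OF yy i]] by blast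
  have "positive_el ((y + d) - \<epsilon> *\<^sub>R 1)" using positive_el_add[OF e(2) pd] by (simp add: algebra_simps)
  then have iyd: "invertible_el (y + d)" using invertible_el_if_positive_margin e(1) by blast
  have "(y + d) * (y - d) = y * y - y * d + d * y - d * d" by (simp add: algebra_simps)
  also have "\<dots> = 0" by (simp add: yy dd yd)
  finally have "inv_el (y + d) * ((y + d) * (y - d)) = 0" by simp
  then show ?thesis using iyd by (simp add: inv_el_mult_cancel_left d_def)
qed

lemma psqrt_eq_pos_sqrt: assumes "positive_el c" "invertible_el c" shows "psqrt scaleC star c = pos_sqrt c"
  unfolding psqrt_def
proof (rule the_equality)
  show "positive_el (pos_sqrt c) \<and> pos_sqrt c * pos_sqrt c = c"
    using pos_sqrt_square positive_el_pos_sqrt assms(1) by blast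
qed (use pos_sqrt_unique[OF assms] in blast)

text \<open>With \<open>e = c\<^sup>-\<^sup>1\<^sup>/\<^sup>2\<close>, which commutes with \<open>c\<close>, one has \<open>e (c - 1) e = 1 - c\<^sup>-\<^sup>1\<close>.\<close>

lemma positive_el_one_minus_inv_el:
  assumes p: "positive_el c" and i: "invertible_el c" and q: "positive_el (c - 1)"
  shows "positive_el (1 - inv_el c)"
proof -
  have pi: "positive_el (inv_el c)" by (rule positive_el_inv_el[OF p i])
  define e where "e = pos_sqrt (inv_el c)"
  have ee: "e * e = inv_el c" and se: "star e = e"
    unfolding e_def using pos_sqrt_square star_pos_sqrt pi by blast+
  have ce: "c * e = e * c" unfolding e_def by (rule pos_sqrt_commute[OF pi]) (use i in simp)
  have "star e * (c - 1) * e = c * (e * e) - e * e" by (simp add: se algebra_simps ce[symmetric] mult.assoc)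
  also have "\<dots> = 1 - inv_el c" using i by (simp add: ee)
  finally show ?thesis using positive_el_congruence[OF q, of e] by simp
qed

text \<open>Conjugating by \<open>a\<^sup>-\<^sup>1\<^sup>/\<^sup>2\<close> reduces the claim to the case \<open>a = 1\<close>.\<close>

lemma inv_el_antimono:
  assumes pa: "positive_el a" and ia: "invertible_el a" and ib: "invertible_el b" and pba: "positive_el (b - a)"
  shows "positive_el (inv_el a - inv_el b)"
proof -
  define d where "d = pos_sqrt a"
  have dd: "d * d = a" and sd: "star d = d"
    unfolding d_def using pos_sqrt_square star_pos_sqrt pa by blast+
  have id: "invertible_el d" by (rule invertible_el_if_square[OF dd ia])
  define di where "di = inv_el d"
  have sdi: "star di = di" unfolding di_def by (rule star_inv_el_selfadjoint[OF id sd])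
  have didi: "di * di = inv_el a"
    unfolding di_def dd[symmetric] by (rule inv_el_mult[OF id id, symmetric])
  have d_di: "di * d = 1" "d * di = 1" using id by (simp_all add: di_def)
  define b' where "b' = di * b * di"
  have "star di * (b - a) * di = b' - di * (d * d) * di" by (simp add: sdi b'_def algebra_simps dd)
  also have "di * (d * d) * di = (di * d) * (d * di)" by (simp only: mult.assoc)
  also have "\<dots> = 1" by (simp add: d_di)
  finally have q: "positive_el (b' - 1)" using positive_el_congruence[OF pba, of di] by simp
  have pb': "positive_el b'" using positive_el_add[OF q positive_el_one] by simp
  have ib': "invertible_el b'"
    unfolding b'_def di_def by (intro invertible_el_mult invertible_el_inv_el id ib)
  have ib'e: "inv_el b' = d * inv_el b * d"
    unfolding b'_def di_def using id ib
    by (simp add: inv_el_mult invertible_el_mult invertible_el_inv_el inv_el_inv_el mult.assoc)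
  have "star di * (1 - inv_el b') * di = di * di - (di * d) * inv_el b * (d * di)"
    by (simp add: sdi ib'e algebra_simps mult.assoc)
  also have "\<dots> = inv_el a - inv_el b" by (simp add: d_di didi)
  finally show ?thesis
    using positive_el_congruence[OF positive_el_one_minus_inv_el[OF pb' ib' q], of di] by simp
qed

section \<open>Closed *-subalgebras\<close>

lemma cstar_subalg_one: "cstar_subalg scaleC star B \<Longrightarrow> 1 \<in> B"
  unfolding cstar_subalg_def by blast

lemma cstar_subalg_add: "cstar_subalg scaleC star B \<Longrightarrow> x \<in> B \<Longrightarrow> y \<in> B \<Longrightarrow> x + y \<in> B"
  unfolding cstar_subalg_def by blast

lemma cstar_subalg_mult: "cstar_subalg scaleC star B \<Longrightarrow> x \<in> B \<Longrightarrow> y \<in> B \<Longrightarrow> x * y \<in> B"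
  unfolding cstar_subalg_def by blast

lemma cstar_subalg_scaleC: "cstar_subalg scaleC star B \<Longrightarrow> x \<in> B \<Longrightarrow> scaleC a x \<in> B"
  unfolding cstar_subalg_def by blast

lemma cstar_subalg_star: "cstar_subalg scaleC star B \<Longrightarrow> x \<in> B \<Longrightarrow> star x \<in> B"
  unfolding cstar_subalg_def by blast

lemma cstar_subalg_scaleR: "cstar_subalg scaleC star B \<Longrightarrow> x \<in> B \<Longrightarrow> r *\<^sub>R x \<in> B"
  using cstar_subalg_scaleC[of B x "complex_of_real r"] by simp

lemma cstar_subalg_diff: "cstar_subalg scaleC star B \<Longrightarrow> x \<in> B \<Longrightarrow> y \<in> B \<Longrightarrow> x - y \<in> B"
  using cstar_subalg_add[of B x "(-1) *\<^sub>R y"] cstar_subalg_scaleR[of B y "-1"] by simp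

lemma cstar_subalg_power: "cstar_subalg scaleC star B \<Longrightarrow> x \<in> B \<Longrightarrow> x ^ n \<in> B"
  by (induction n) (auto simp: cstar_subalg_one cstar_subalg_mult)

lemma cstar_subalg_inv_el_one_minus:
  assumes B: "cstar_subalg scaleC star B" and x: "x \<in> B" and n: "norm x < 1"
  shows "inv_el (1 - x) \<in> B"
proof -
  have partial: "(\<Sum>i<m. x ^ i) \<in> B" for m
  proof (induction m)
    case 0
    then show ?case using cstar_subalg_scaleR[OF B cstar_subalg_one[OF B], of 0] by simp
  qed (simp add: cstar_subalg_add cstar_subalg_power B x)
  have lim: "(\<lambda>m. \<Sum>i<m. x ^ i) \<longlonglongrightarrow> (\<Sum>n. x ^ n)"
    by (rule summable_LIMSEQ[OF summable_norm_cancel[OF summable_norm_power[OF n]]])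
  have "closed B" using B unfolding cstar_subalg_def by blast
  then have "(\<Sum>n. x ^ n) \<in> B" using closed_sequentially[OF _ partial lim] by blast
  then show ?thesis using invertible_el_one_minus(2)[OF n] by simp
qed

text \<open>
  For invertible \<open>a \<ge> 0\<close> we have \<open>a = \<parallel>a\<parallel>(1 - y)\<close> with \<open>y \<in> B\<close> and \<open>\<parallel>y\<parallel> < 1\<close>, because \<open>a\<close> is bounded below;
  the general case follows from \<open>x\<^sup>-\<^sup>1 = (x\<^sup>*x)\<^sup>-\<^sup>1x\<^sup>*\<close>.
\<close>

lemma cstar_subalg_inv_el_positive:
  assumes B: "cstar_subalg scaleC star B" and aB: "a \<in> B" and pa: "positive_el a" and ia: "invertible_el a"
  shows "inv_el a \<in> B"
proof -
  obtain \<epsilon> where e: "\<epsilon> > 0" "positive_el (a - \<epsilon> *\<^sub>R 1)"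
    using positive_el_invertible_lower_bound[OF pa ia] by blast
  define l where "l = norm a"
  have l0: "l > 0" using ia not_invertible_el_zero by (auto simp: l_def)
  define y where "y = (1 / l) *\<^sub>R (l *\<^sub>R 1 - a)"
  have "positive_el ((l - \<epsilon>) *\<^sub>R 1 - (l *\<^sub>R 1 - a))" using e(2) by (simp add: algebra_simps)
  moreover have "positive_el (l *\<^sub>R 1 - a)" using positive_el_shift[OF pa] by (simp add: l_def)
  ultimately have "norm (l *\<^sub>R 1 - a) \<le> l - \<epsilon>" using positive_el_norm_le by blast
  then have "norm y \<le> (l - \<epsilon>) / l" using l0 by (simp add: y_def divide_right_mono)
  also have "\<dots> < 1" using l0 e(1) by simp
  finally have ny: "norm y < 1" .
  have yB: "y \<in> B"
    unfolding y_def by (intro cstar_subalg_scaleR cstar_subalg_diff cstar_subalg_one aB B)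
  have "a = scaleC (complex_of_real l) (1 - y)" using l0 by (simp add: y_def algebra_simps)
  then have "inv_el a = (1 / l) *\<^sub>R inv_el (1 - y)"
    using inv_el_scaleC[OF invertible_el_one_minus(1)[OF ny], of "complex_of_real l"] l0
    by (simp flip: scaleC_of_real)
  then show ?thesis using cstar_subalg_inv_el_one_minus[OF B yB ny] cstar_subalg_scaleR[OF B] by simp
qed

lemma cstar_subalg_inv_el:
  assumes B: "cstar_subalg scaleC star B" and x: "x \<in> B" and i: "invertible_el x"
  shows "inv_el x \<in> B"
proof -
  have "inv_el (star x * x) \<in> B"
    by (intro cstar_subalg_inv_el_positive B cstar_subalg_mult cstar_subalg_star x
        positive_el_star_mult_self invertible_el_mult invertible_el_star i)
  moreover have "inv_el x = inv_el (star x * x) * star x"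
  proof -
    have "inv_el (star x * x) * star x * x = 1"
      using invertible_el_mult[OF invertible_el_star i] i by (simp add: mult.assoc)
    then show ?thesis by (metis i mult.assoc mult_1_left mult_1_right right_inv_el)
  qed
  ultimately show ?thesis by (simp add: cstar_subalg_mult cstar_subalg_star B x)
qed

lemma positive_in_cstar_subalg:
  assumes B: "cstar_subalg scaleC star B" and aB: "a \<in> B" and p: "positive_el a"
  shows "positive_in scaleC star B a"
  unfolding positive_in_def
proof (intro conjI ballI)
  show "star a = a" using positive_el_selfadjoint[OF p] .
  fix z assume z: "z \<in> spec_in scaleC B a"
  have "\<not> invertible_el (a - scaleC z 1)"
  proof
    assume i: "invertible_el (a - scaleC z 1)"
    have "a - scaleC z 1 \<in> B" by (intro cstar_subalg_diff cstar_subalg_scaleC cstar_subalg_one B aB)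
    then have "inv_el (a - scaleC z 1) \<in> B" using cstar_subalg_inv_el[OF B _ i] by blast
    then show False using z i unfolding spec_in_def by auto
  qed
  then show "Im z = 0" "0 \<le> Re z" using positive_el_spectrum[OF p] by auto
qed (rule aB)

lemma cstar_subalg_cstar_gen: "cstar_subalg scaleC star (cstar_gen scaleC star t)"
  unfolding cstar_gen_def cstar_subalg_def[of scaleC star "\<Inter> _"]
  by (intro conjI closed_Inter) (auto simp: cstar_subalg_def)

lemma mem_cstar_gen: "t \<in> cstar_gen scaleC star t"
  unfolding cstar_gen_def by blast

end

locale expansive = cstar +
  fixes t :: 'a
  assumes expansive: "le_in scaleC star UNIV 1 (star t * t)"
begin

abbreviation "s \<equiv> star t * t"
abbreviation "r \<equiv> inv_el s"
abbreviation "T \<equiv> tp star t"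
abbreviation "Tadj \<equiv> star (tp star t)"
abbreviation "c \<equiv> ck star t"
abbreviation "p \<equiv> pk star t"
abbreviation "u \<equiv> uk star t"
abbreviation "v \<equiv> vk star t"
abbreviation "B \<equiv> cstar_gen scaleC star t"

lemma positive_s_minus_one: "positive_el (s - 1)"
  using expansive unfolding le_in_UNIV_iff by simp

lemma invertible_s: "invertible_el s"
  using invertible_el_if_positive_margin[of s 1] positive_s_minus_one by simp

lemma star_r: "star r = r"
  by (rule star_inv_el_selfadjoint[OF invertible_s]) simp

lemma positive_r: "positive_el r"
  by (rule positive_el_inv_el[OF positive_el_star_mult_self invertible_s])

lemma positive_one_minus_r: "positive_el (1 - r)"
  by (rule positive_el_one_minus_inv_el[OF positive_el_star_mult_self invertible_s positive_s_minus_one])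

lemma Tadj_eq: "Tadj = r * star t"
  by (simp add: tp_def star_r)

lemma Tadj_mult_T: "Tadj * T = r"
proof -
  have "Tadj * T = r * (s * r)" by (simp add: Tadj_eq tp_def star_r mult.assoc)
  then show ?thesis using invertible_s by simp
qed

lemma star_T_power: "star (T ^ k) = Tadj ^ k"
  by (simp add: star_power)

lemma star_Tadj_power: "star (Tadj ^ k) = T ^ k"
  by (simp add: star_power)

lemma c_eq: "c k = Tadj ^ k * T ^ k"
  by (simp add: ck_def)

lemma c_Suc: "c (Suc k) = Tadj * c k * T"
  by (simp only: c_eq power_Suc[of Tadj k] power_Suc2[of T k] mult.assoc)

lemma c_Suc_eq: "c (Suc k) = Tadj ^ k * r * T ^ k"
proof -
  have "c (Suc k) = Tadj ^ k * (Tadj * T) * T ^ k"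
    by (simp only: c_eq power_Suc2[of Tadj k] power_Suc[of T k] mult.assoc)
  then show ?thesis by (simp only: Tadj_mult_T)
qed

lemma star_c: "star (c k) = c k"
  by (simp add: c_eq star_T_power star_Tadj_power)

lemma positive_c: "positive_el (c k)"
  using positive_el_star_mult_self[of "T ^ k"] by (simp add: c_eq star_T_power)

lemma positive_c_diff: "positive_el (c k - c (Suc k))"
proof -
  have "c k - c (Suc k) = star (T ^ k) * (1 - r) * T ^ k"
    by (simp only: c_Suc_eq star_T_power) (simp add: c_eq algebra_simps)
  then show ?thesis by (simp only: positive_el_congruence[OF positive_one_minus_r])
qed

lemma positive_one_minus_c: "positive_el (1 - c k)"
proof (induction k)
  case (Suc k)
  then show ?case using positive_el_add[OF Suc.IH positive_c_diff[of k]] by simp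
qed (simp add: c_eq)

text \<open>\<open>c\<^sub>k\<close> is bounded below: \<open>c\<^sub>k\<^sub>+\<^sub>1 - \<epsilon>\<delta> = t'\<^sup>*(c\<^sub>k - \<epsilon>)t' + \<epsilon>(r - \<delta>)\<close>.\<close>

lemma invertible_c: "invertible_el (c k)"
proof -
  obtain \<delta> where d: "\<delta> > 0" "positive_el (r - \<delta> *\<^sub>R 1)"
    using positive_el_invertible_lower_bound[OF positive_r invertible_el_inv_el[OF invertible_s]] by blast
  have "\<exists>\<epsilon>>0. positive_el (c k - \<epsilon> *\<^sub>R 1)"
  proof (induction k)
    case 0
    show ?case by (intro exI[of _ 1]) (simp add: c_eq)
  next
    case (Suc k)
    then obtain \<epsilon> where e: "\<epsilon> > 0" "positive_el (c k - \<epsilon> *\<^sub>R 1)" by blast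
    have "c (Suc k) - (\<epsilon> * \<delta>) *\<^sub>R 1 = star T * (c k - \<epsilon> *\<^sub>R 1) * T + \<epsilon> *\<^sub>R (r - \<delta> *\<^sub>R 1)"
      by (simp add: c_Suc algebra_simps Tadj_mult_T)
    moreover have "positive_el (star T * (c k - \<epsilon> *\<^sub>R 1) * T + \<epsilon> *\<^sub>R (r - \<delta> *\<^sub>R 1))"
      using e d by (intro positive_el_add positive_el_congruence positive_el_scaleR) simp_all
    ultimately show ?case using e d by (intro exI[of _ "\<epsilon> * \<delta>"]) simp
  qed
  then show ?thesis using invertible_el_if_positive_margin by blast
qed

lemma star_inv_c: "star (inv_el (c k)) = inv_el (c k)"
  by (rule star_inv_el_selfadjoint[OF invertible_c star_c])

lemma c_normalized_le_one:
  "le_in scaleC star UNIV (inv_el (psqrt scaleC star (c k)) * c (Suc k) * inv_el (psqrt scaleC star (c k))) 1"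
proof -
  define d where "d = pos_sqrt (c k)"
  have dd: "d * d = c k" and sd: "star d = d"
    unfolding d_def using pos_sqrt_square star_pos_sqrt positive_c by blast+
  have id: "invertible_el d" by (rule invertible_el_if_square[OF dd invertible_c])
  define di where "di = inv_el d"
  have sdi: "star di = di" unfolding di_def by (rule star_inv_el_selfadjoint[OF id sd])
  have "di * c k * di = (di * d) * (d * di)" by (simp add: dd[symmetric] mult.assoc)
  also have "\<dots> = 1" using id by (simp add: di_def)
  finally have "1 - di * c (Suc k) * di = star di * (c k - c (Suc k)) * di"
    by (simp add: sdi algebra_simps)
  then have "positive_el (1 - di * c (Suc k) * di)"
    using positive_el_congruence[OF positive_c_diff] by simp
  moreover have "psqrt scaleC star (c k) = d"
    unfolding d_def by (rule psqrt_eq_pos_sqrt[OF positive_c invertible_c])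
  ultimately show ?thesis
    unfolding le_in_UNIV_iff by (simp add: di_def[symmetric] sdi star_c mult.assoc)
qed

lemma star_p: "star (p k) = p k"
  by (simp add: pk_def star_T_power star_Tadj_power star_inv_c mult.assoc)

lemma p_mult_T_power: "p k * T ^ k = T ^ k"
proof -
  have "p k * T ^ k = T ^ k * inv_el (c k) * c k"
    by (simp only: pk_def c_eq mult.assoc)
  then show ?thesis using invertible_c by (simp add: mult.assoc)
qed

lemma p_idem: "p k * p k = p k"
  by (metis pk_def p_mult_T_power mult.assoc)

lemma p_mult_p_Suc: "p k * p (Suc k) = p (Suc k)"
proof -
  have "p k * T ^ Suc k = T ^ Suc k"
    using p_mult_T_power[of k] by (metis mult.assoc power_Suc2)
  then show ?thesis by (metis pk_def mult.assoc)
qed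

lemma p_Suc_mult_p: "p (Suc k) * p k = p (Suc k)"
  using arg_cong[OF p_mult_p_Suc, of star] by (simp add: star_p)

lemma positive_p: "positive_el (p k)"
  by (rule positive_el_projection[OF star_p p_idem])

lemma positive_p_diff: "positive_el (p k - p (Suc k))"
  by (rule positive_el_projection) (simp_all add: star_p algebra_simps p_idem p_mult_p_Suc p_Suc_mult_p)

lemma positive_one_minus_p: "positive_el (1 - p k)"
  by (rule positive_el_projection) (simp_all add: star_p algebra_simps p_idem)

lemma u_eq_Suc: "u k = T ^ Suc k * inv_el (c k) * Tadj ^ Suc k"
  by (simp add: uk_def)

lemma u_eq: "u k = T * p k * Tadj"
  by (simp only: u_eq_Suc pk_def power_Suc[of T k] power_Suc2[of Tadj k] mult.assoc)

lemma star_u: "star (u k) = u k"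
  by (simp add: u_eq star_p mult.assoc)

lemma positive_T_Tadj_power: "positive_el (T ^ k * Tadj ^ k)"
  using positive_el_star_mult_self[of "Tadj ^ k"] by (simp add: star_Tadj_power)

lemma positive_u_diff_T_Tadj_power: "positive_el (u k - T ^ Suc k * Tadj ^ Suc k)"
proof -
  have "u k - T ^ Suc k * Tadj ^ Suc k = star (Tadj ^ Suc k) * (inv_el (c k) - 1) * Tadj ^ Suc k"
    by (simp only: star_Tadj_power) (simp add: u_eq_Suc algebra_simps)
  moreover have "positive_el (inv_el (c k) - 1)"
    using inv_el_antimono[OF positive_c invertible_c invertible_el_one] positive_one_minus_c by simp
  ultimately show ?thesis by (simp only: positive_el_congruence)
qed

lemma positive_p_Suc_diff_u: "positive_el (p (Suc k) - u k)"
proof -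
  have "p (Suc k) - u k = star (Tadj ^ Suc k) * (inv_el (c (Suc k)) - inv_el (c k)) * Tadj ^ Suc k"
    by (simp only: star_Tadj_power) (simp add: u_eq_Suc pk_def algebra_simps)
  moreover have "positive_el (inv_el (c (Suc k)) - inv_el (c k))"
    by (rule inv_el_antimono[OF positive_c invertible_c invertible_c positive_c_diff])
  ultimately show ?thesis by (simp only: positive_el_congruence)
qed

lemma positive_u_diff: "positive_el (u k - u (Suc k))"
proof -
  have "u k - u (Suc k) = star Tadj * (p k - p (Suc k)) * Tadj"
    by (simp add: u_eq algebra_simps)
  then show ?thesis by (simp only: positive_el_congruence[OF positive_p_diff])
qed

lemma v_eq: "v k = p k * Tadj * T * p k"
proof -
  have "p k * Tadj * T * p k = T ^ k * inv_el (c k) * (Tadj ^ k * Tadj * T * T ^ k) * inv_el (c k) * Tadj ^ k"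
    by (simp only: pk_def mult.assoc)
  also have "Tadj ^ k * Tadj * T * T ^ k = c (Suc k)"
    by (simp only: c_eq power_Suc2[of Tadj k] power_Suc[of T k] mult.assoc)
  finally show ?thesis by (simp add: vk_def mult.assoc)
qed

lemma v_Suc: "v (Suc k) = p (Suc k) * v k * p (Suc k)"
proof -
  have "p (Suc k) * v k * p (Suc k) = (p (Suc k) * p k) * Tadj * T * (p k * p (Suc k))"
    by (simp only: v_eq[of k] mult.assoc)
  then show ?thesis by (simp only: p_Suc_mult_p p_mult_p_Suc v_eq[of "Suc k"])
qed

lemma star_v: "star (v k) = v k"
  by (simp add: v_eq star_p mult.assoc)

lemma positive_v: "positive_el (v k)"
  using positive_el_star_mult_self[of "T * p k"] by (simp add: v_eq star_p mult.assoc)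

lemma positive_p_diff_v: "positive_el (p k - v k)"
proof -
  have "p k - v k = star (p k) * (1 - r) * p k"
    by (simp add: v_eq star_p algebra_simps p_idem Tadj_mult_T[symmetric] mult.assoc)
  then show ?thesis by (simp only: positive_el_congruence[OF positive_one_minus_r])
qed

lemma s_in_cstar_gen: "s \<in> B"
  by (intro cstar_subalg_mult cstar_subalg_star cstar_subalg_cstar_gen mem_cstar_gen)

lemma T_in_cstar_gen: "T \<in> B"
  unfolding tp_def
  by (intro cstar_subalg_mult cstar_subalg_cstar_gen mem_cstar_gen
      cstar_subalg_inv_el[OF cstar_subalg_cstar_gen s_in_cstar_gen invertible_s])

lemma c_in_cstar_gen: "c k \<in> B"
  unfolding ck_def
  by (intro cstar_subalg_mult cstar_subalg_power cstar_subalg_star cstar_subalg_cstar_gen T_in_cstar_gen)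

lemma inv_c_in_cstar_gen: "inv_el (c k) \<in> B"
  by (rule cstar_subalg_inv_el[OF cstar_subalg_cstar_gen c_in_cstar_gen invertible_c])

lemma p_u_v_in_cstar_gen: "p k \<in> B" "u k \<in> B" "v k \<in> B"
  unfolding pk_def uk_def vk_def
  by (intro cstar_subalg_mult cstar_subalg_power cstar_subalg_star cstar_subalg_cstar_gen
      T_in_cstar_gen inv_c_in_cstar_gen c_in_cstar_gen)+

lemma s_ge_one_in_cstar_gen: "le_in scaleC star B 1 s"
  unfolding le_in_def using positive_s_minus_one
  by (simp add: positive_in_cstar_subalg cstar_subalg_cstar_gen cstar_subalg_one cstar_subalg_diff
      s_in_cstar_gen)

end

theorem proposition8p3:
  fixes scaleC :: "complex \<Rightarrow> 'a::{banach, real_normed_algebra_1} \<Rightarrow> 'a"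
    and star :: "'a \<Rightarrow> 'a" and t :: 'a
  assumes C: "cstar_algebra scaleC star"
    and exp: "le_in scaleC star UNIV 1 (star t * t)"
  shows "(\<forall>k::nat.
      \<comment> \<open>(i)\<close>
      pk star t k = star (pk star t k) * pk star t k \<and>
      pk star t k * pk star t (k + 1) = pk star t (k + 1) \<and>
      le_in scaleC star UNIV 0 (pk star t (k + 1)) \<and>
      le_in scaleC star UNIV (pk star t (k + 1)) (pk star t k) \<and>
      le_in scaleC star UNIV (pk star t k) 1 \<and>
      \<comment> \<open>(ii)\<close>
      le_in scaleC star UNIV 0 (ck star t (k + 1)) \<and>
      le_in scaleC star UNIV (ck star t (k + 1)) (ck star t k) \<and>
      le_in scaleC star UNIV (ck star t k) 1 \<and>
      le_in scaleC star UNIV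
        (inv_el (psqrt scaleC star (ck star t k)) * ck star t (k + 1) *
         inv_el (psqrt scaleC star (ck star t k))) 1 \<and>
      \<comment> \<open>(iii)\<close>
      uk star t k = tp star t * pk star t k * star (tp star t) \<and>
      le_in scaleC star UNIV 0 ((tp star t) ^ (k + 1) * (star (tp star t)) ^ (k + 1)) \<and>
      le_in scaleC star UNIV ((tp star t) ^ (k + 1) * (star (tp star t)) ^ (k + 1)) (uk star t k) \<and>
      le_in scaleC star UNIV (uk star t k) (pk star t (k + 1)) \<and>
      le_in scaleC star UNIV (pk star t (k + 1)) 1 \<and>
      le_in scaleC star UNIV (uk star t (k + 1)) (uk star t k) \<and>
      \<comment> \<open>(iv)\<close>
      vk star t (k + 1) = pk star t (k + 1) * vk star t k * pk star t (k + 1) \<and>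
      vk star t k = pk star t k * star (tp star t) * tp star t * pk star t k \<and>
      le_in scaleC star UNIV 0 (vk star t k) \<and>
      le_in scaleC star UNIV (vk star t k) (pk star t k) \<and>
      le_in scaleC star UNIV (pk star t k) 1)
    \<and> t \<in> cstar_gen scaleC star t
    \<and> le_in scaleC star (cstar_gen scaleC star t) 1 (star t * t)
    \<and> tp star t \<in> cstar_gen scaleC star t
    \<and> (\<forall>k::nat.
         ck star t k \<in> cstar_gen scaleC star t \<and>
         inv_el (ck star t k) \<in> cstar_gen scaleC star t \<and>
         pk star t k \<in> cstar_gen scaleC star t \<and>
         uk star t k \<in> cstar_gen scaleC star t \<and>
         vk star t k \<in> cstar_gen scaleC star t)"
proof -
  interpret expansive scaleC star t
    using C exp by (simp add: expansive_def expansive_axioms_def cstar_def)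
  show ?thesis
    unfolding Suc_eq_plus1[symmetric]
    by (intro conjI allI c_normalized_le_one le_in_UNIV_intro p_mult_p_Suc u_eq v_Suc v_eq
        mem_cstar_gen s_ge_one_in_cstar_gen T_in_cstar_gen c_in_cstar_gen inv_c_in_cstar_gen
        p_u_v_in_cstar_gen star_p star_c star_u star_v positive_p_diff positive_one_minus_p
        positive_c_diff positive_one_minus_c positive_u_diff_T_Tadj_power positive_p_Suc_diff_u
        positive_u_diff positive_p_diff_v)
      (simp_all add: star_p p_idem positive_p positive_c positive_T_Tadj_power positive_v
        star_T_power star_Tadj_power del: power_Suc)
qed

end
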